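(* Let $n\ge3$, $R>0$, $\Omega=B_R\subset\mathbb{R}^n$ the ball centred at $0$. Let $\phi,\psi\in C^2([0,\infty))$ with $\phi>0$ on $[0,\infty)$ and $\psi(s)=s\beta(s)$ for some $\beta\in C^2([0,\infty))$, $\beta>0$. Let $s_0,b,L>0$ and define $G(s)=\int_{s_0}^s\int_{s_0}^\sigma\frac{\phi(\tau)}{\psi(\tau)}\,d\tau\,d\sigma$ ($s>0$), $H(s)=\int_0^s\frac{\sigma\phi(\sigma)}{\psi(\sigma)}\,d\sigma$ ($s\ge0$). Assume $H(s)\le\gamma G(s)+b(s+1)$ for all $s>0$ with some $\gamma\in(0,\frac{n-2}{n})$, and $\frac{s^2}{\psi(s)}\le L(G(s)+s+1)$ for all $s>0$. Fix $m>0$, $M>0$, $B>0$, $\kappa>n-2$, and let $\mathcal{S}$ be the set of all $(u,v)\in C^1(\bar\Omega)\times C^2(\bar\Omega)$ such that $u,v$ are positive and radially symmetric, $\frac{\partial v}{\partial\nu}=0$ on $\partial\Omega$, $\int_\Omega u=m$, $\int_\Omega v\le M$, and $v(x)\le B|x|^{-\kappa}$ for all $x\in\Omega$. Then there exist $\mu=\mu(\gamma)\in(0,2)$ and $C(m)>0$ such that for all $r_0\in(0,R)$ and all $(u,v)\in\mathcal{S}$, $$\int_{B_{r_0}}|\nabla v|^2\le\mu\int_\Omega G(u)+C(m)\Big\{r_0\|\Delta v-v+u\|_{L^2(\Omega)}^2+r_0\Big\|\frac{\phi(u)}{\sqrt{\psi(u)}}\nabla u-\sqrt{\psi(u)}\nabla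 v\Big\|_{L^2(\Omega)}^2+\|v\|_{L^2(\Omega)}^2+1\Big\}.$$
   Context: $B_{r_0}$ denotes the ball of radius $r_0$ centred at $0$. *)

theory Defs
  imports "HOL-Analysis.Analysis"
begin

definition C2_real_on :: "real set \<Rightarrow> (real \<Rightarrow> real) \<Rightarrow> bool" where
  "C2_real_on S f \<longleftrightarrow> (\<exists>f' f''.
     (\<forall>x\<in>S. (f has_real_derivative f' x) (at x within S)) \<and>
     (\<forall>x\<in>S. (f' has_real_derivative f'' x) (at x within S)) \<and>
     continuous_on S f'')"

definition C1_grad_on :: "'a::euclidean_space set \<Rightarrow> ('a \<Rightarrow> real) \<Rightarrow> ('a \<Rightarrow> 'a) \<Rightarrow> bool" where
  "C1_grad_on S f g \<longleftrightarrow>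
     (\<forall>x\<in>S. (f has_derivative (\<lambda>h. g x \<bullet> h)) (at x within S)) \<and> continuous_on S g"

definition C2_grad_on :: "'a::euclidean_space set \<Rightarrow> ('a \<Rightarrow> real) \<Rightarrow> ('a \<Rightarrow> 'a)
    \<Rightarrow> ('a \<Rightarrow> 'a \<Rightarrow> 'a) \<Rightarrow> bool" where
  "C2_grad_on S f g hess \<longleftrightarrow> C1_grad_on S f g \<and>
     (\<forall>b\<in>Basis. C1_grad_on S (\<lambda>x. g x \<bullet> b) (hess b))"

definition laplacian :: "('a::euclidean_space \<Rightarrow> 'a \<Rightarrow> 'a) \<Rightarrow> 'a \<Rightarrow> real" where
  "laplacian hess x = (\<Sum>b\<in>Basis. hess b x \<bullet> b)"

definition radial_on :: "'a::real_normed_vector set \<Rightarrow> ('a \<Rightarrow> real) \<Rightarrow> bool" where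
  "radial_on S f \<longleftrightarrow> (\<forall>x\<in>S. \<forall>y\<in>S. norm x = norm y \<longrightarrow> f x = f y)"

end

theory Submission
  imports Defs
begin

text \<open>For radial \<open>u, v\<close> with profiles \<open>U, V\<close> all integrals reduce to weighted integrals
  over \<open>[0, R]\<close> with weight \<open>r\<^sup>n\<^sup>-\<^sup>1\<close>. Multiplying \<open>\<Delta>v = V'' + (n - 1) V'/r\<close> by \<open>r\<^sup>n V'\<close> gives
  \<open>(n - 2)/2 r\<^sup>n\<^sup>-\<^sup>1 V'\<^sup>2\<close> plus the derivative of \<open>r\<^sup>n V'\<^sup>2/2\<close> (a Pohozaev identity). Writing
  \<open>\<Delta>v = (\<Delta>v - v + u) + v - u\<close> and expressing \<open>U V'\<close> through the flux
  \<open>\<phi>(U) U'/\<surd>\<psi>(U) - \<surd>\<psi>(U) V'\<close> turns \<open>r\<^sup>n U V'\<close> into \<open>(r\<^sup>n H(U))' - n r\<^sup>n\<^sup>-\<^sup>1 H(U)\<close> plus a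
  flux term. Integrating over \<open>[0, r\<^sub>0]\<close>, discarding the nonnegative boundary terms and applying Young's
  inequality to the remaining products, the hypotheses \<open>H \<le> \<gamma> G + b (s + 1)\<close> and
  \<open>s\<^sup>2/\<psi> \<le> L (G + s + 1)\<close> leave \<open>\<integral> G(u)\<close> with a coefficient below \<open>2\<close> because
  \<open>\<gamma> < (n - 2)/n\<close>.\<close>

lemma integrable_on_subset_of_compact:
  fixes f :: "'a::euclidean_space \<Rightarrow> real"
  assumes f: "continuous_on K f" and K: "compact K" and S: "S \<subseteq> K" "S \<in> sets lebesgue"
  shows "f integrable_on S"
proof -
  obtain c where c: "\<forall>x\<in>K. norm (f x) \<le> c"
    using compact_imp_bounded[OF compact_continuous_image[OF f K]] by (auto simp: bounded_iff)
  have "S \<in> lmeasurable"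
    using fmeasurableI2[OF lmeasurable_compact[OF K] S(1) S(2)] .
  then have "f absolutely_integrable_on S"
    using continuous_imp_measurable_on_sets_lebesgue[OF continuous_on_subset[OF f S(1)] S(2)] c S(1)
    by (intro measurable_bounded_by_integrable_imp_absolutely_integrable[where g="\<lambda>x. c"])
      (auto intro: integrable_on_const)
  then show ?thesis
    by (simp add: absolutely_integrable_on_def)
qed

lemma has_integral_power_derivative:
  fixes c :: real
  assumes "a \<le> b"
  shows "((\<lambda>r. real n * c * r^(n-1)) has_integral (c * b^n - c * a^n)) {a..b}"
proof -
  have "((\<lambda>r. c * r^n) has_vector_derivative (real n * c * x^(n-1))) (at x within {a..b})" for x
    unfolding has_real_derivative_iff_has_vector_derivative[symmetric]
    by (auto intro!: derivative_eq_intros)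
  then show ?thesis
    using fundamental_theorem_of_calculus[OF assms, of "\<lambda>r. c * r^n"] by simp
qed

lemma zero_if_increments_dominated:
  fixes D g :: "real \<Rightarrow> real"
  assumes D0: "D 0 = 0" and \<rho>: "0 \<le> \<rho>"
    and small: "\<And>e. e > 0 \<Longrightarrow> \<exists>d>0. \<forall>a b. 0 \<le> a \<longrightarrow> a \<le> b \<longrightarrow> b \<le> \<rho> \<longrightarrow> b - a < d
                  \<longrightarrow> \<bar>D b - D a\<bar> \<le> e * (g b - g a)"
  shows "D \<rho> = 0"
proof -
  have bound: "\<bar>D \<rho>\<bar> \<le> e * (g \<rho> - g 0)" if e: "e > 0" for e
  proof -
    obtain d where d: "d > 0" and dom: "\<And>a b. 0 \<le> a \<Longrightarrow> a \<le> b \<Longrightarrow> b \<le> \<rho> \<Longrightarrow> b - a < d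
        \<Longrightarrow> \<bar>D b - D a\<bar> \<le> e * (g b - g a)"
      using small[OF e] by blast
    obtain N :: nat where N: "\<rho> / d < real N"
      using reals_Archimedean2 by blast
    have N_pos: "N > 0"
      using N d \<rho> by (cases N) (auto simp: divide_less_0_iff)
    have mesh: "\<rho> / real N < d"
      using N d N_pos by (simp add: divide_less_eq mult.commute)
    define t where "t k = real k * \<rho> / real N" for k
    have t_incr: "0 \<le> t k" "t k \<le> t (Suc k)" "t (Suc k) - t k < d" for k
      using \<rho> N_pos mesh by (auto simp: t_def divide_simps algebra_simps)
    have t_le: "t k \<le> \<rho>" if "k \<le> N" for k
      using that \<rho> N_pos by (simp add: t_def divide_simps mult.commute[of _ \<rho>] mult_left_mono)
    have "\<bar>D (t k)\<bar> \<le> e * (g (t k) - g 0)" if "k \<le> N" for k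
      using that
    proof (induction k)
      case 0
      then show ?case by (simp add: t_def D0)
    next
      case (Suc k)
      have "\<bar>D (t (Suc k)) - D (t k)\<bar> \<le> e * (g (t (Suc k)) - g (t k))"
        using dom t_incr t_le[OF Suc.prems] by blast
      with Suc show ?case by (simp add: algebra_simps)
    qed
    from this[of N] show ?thesis
      using N_pos by (simp add: t_def)
  qed
  show ?thesis
  proof (rule ccontr)
    assume nz: "D \<rho> \<noteq> 0"
    define e where "e = \<bar>D \<rho>\<bar> / (2 * (\<bar>g \<rho> - g 0\<bar> + 1))"
    have e: "e > 0"
      using nz unfolding e_def by (smt (verit) abs_ge_zero divide_pos_pos zero_less_abs_iff)
    have "e * (g \<rho> - g 0) \<le> e * \<bar>g \<rho> - g 0\<bar>"
      using e by (intro mult_left_mono) auto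
    also have "\<dots> < \<bar>D \<rho>\<bar>"
      using nz by (simp add: e_def field_simps add_pos_nonneg)
    finally show False
      using bound[OF e] by simp
  qed
qed

lemma radial_integral_defect_increment:
  fixes h :: "real \<Rightarrow> real"
  assumes hc: "continuous_on {0..R} h" and ab: "0 \<le> a" "a \<le> b" "b \<le> R"
    and osc: "\<forall>r\<in>{a..b}. \<bar>h r - h a\<bar> \<le> e"
  defines "c \<equiv> measure lborel (ball (0::'a::euclidean_space) 1)"
  defines "D \<equiv> \<lambda>t. integral (ball (0::'a) t) (\<lambda>x. h (norm x))
            - integral {0..t} (\<lambda>r. real DIM('a) * c * r^(DIM('a)-1) * h r)"
  shows "\<bar>D b - D a\<bar> \<le> 2 * e * (c * b^DIM('a) - c * a^DIM('a))"
proof -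
  let ?n = "DIM('a)"
  let ?w = "\<lambda>r. real ?n * c * r^(?n-1)"
  let ?vol = "c * b^?n - c * a^?n"
  have hn: "continuous_on (cball (0::'a) R) (\<lambda>x. h (norm x))"
    by (rule continuous_on_compose2[OF hc continuous_on_norm_id]) auto
  have int_ball: "(\<lambda>x. h (norm x)) integrable_on ball (0::'a) t" if "t \<le> R" for t
    using that by (intro integrable_on_subset_of_compact[OF hn]) auto
  define A where "A = ball (0::'a) b - ball 0 a"
  have A_meas: "A \<in> lmeasurable"
    unfolding A_def by (intro fmeasurable_Diff) auto
  have vol_ball: "measure lborel (ball (0::'a) t) = c * t^?n" if "t \<ge> 0" for t
    using content_ball_conv_unit_ball[OF that] by (simp add: c_def mult.commute)
  have A_vol: "measure lebesgue A = ?vol"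
    unfolding A_def using ab by (subst measurable_measure_Diff) (auto simp: vol_ball subset_ball)
  have int_A: "(\<lambda>x. h (norm x)) integrable_on A"
    unfolding A_def using ab by (intro integrable_on_subset_of_compact[OF hn]) auto
  have const_A: "integral A (\<lambda>x. k) = k * ?vol" for k
    using lmeasure_integral[OF A_meas] A_vol integral_mult_right[of A k "\<lambda>x. 1::real"] by simp
  have ball_diff: "integral (ball (0::'a) b) (\<lambda>x. h (norm x)) - integral (ball (0::'a) a) (\<lambda>x. h (norm x))
      = integral A (\<lambda>x. h (norm x))"
    unfolding A_def using ab by (subst integral_setdiff) (auto intro!: int_ball simp: subset_ball)
  have ball_err: "\<bar>integral A (\<lambda>x. h (norm x)) - h a * ?vol\<bar> \<le> e * ?vol"
  proof -
    have "integral A (\<lambda>x. h (norm x)) - h a * ?vol = integral A (\<lambda>x. h (norm x) - h a)"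
      using const_A[of "h a"] integral_diff[OF int_A integrable_on_const[OF A_meas]] by simp
    also have "\<bar>\<dots>\<bar> \<le> integral A (\<lambda>x. e)"
    proof -
      have "norm (integral A (\<lambda>x. h (norm x) - h a)) \<le> integral A (\<lambda>x. e)"
      proof (rule integral_norm_bound_integral)
        show "(\<lambda>x. h (norm x) - h a) integrable_on A" "(\<lambda>x. e) integrable_on A"
          using integrable_diff[OF int_A integrable_on_const[OF A_meas]] integrable_on_const[OF A_meas]
          by auto
        show "norm (h (norm x) - h a) \<le> e" if "x \<in> A" for x
          using osc that by (auto simp: A_def)
      qed
      then show ?thesis by simp
    qed
    finally show ?thesis
      using const_A by simp
  qed
  have c_nonneg: "c \<ge> 0"
    unfolding c_def by simp
  have hab: "continuous_on {a..b} h"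
    using continuous_on_subset[OF hc] ab by auto
  have int_w: "(\<lambda>r. ?w r * h r) integrable_on {s..t}" if "0 \<le> s" "t \<le> R" for s t
    using that by (intro integrable_continuous_interval continuous_intros continuous_on_subset[OF hc]) auto
  have interval_diff: "integral {0..b} (\<lambda>r. ?w r * h r) - integral {0..a} (\<lambda>r. ?w r * h r)
      = integral {a..b} (\<lambda>r. ?w r * h r)"
    using Henstock_Kurzweil_Integration.integral_combine[where a=0 and c=a and b=b and f="\<lambda>r. ?w r * h r"] ab int_w[of 0 b] by simp
  have const_w: "integral {a..b} (\<lambda>r. ?w r * k) = k * ?vol" for k
    using integral_unique[OF has_integral_mult_left[OF has_integral_power_derivative[OF ab(2), of ?n c], of k]]
    by (simp add: mult.commute)
  have interval_err: "\<bar>integral {a..b} (\<lambda>r. ?w r * h r) - h a * ?vol\<bar> \<le> e * ?vol"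
  proof -
    have "integral {a..b} (\<lambda>r. ?w r * h r) - h a * ?vol = integral {a..b} (\<lambda>r. ?w r * (h r - h a))"
      using const_w[of "h a"] integral_diff[OF int_w[of a b], of "\<lambda>r. ?w r * h a"] ab
      by (simp add: algebra_simps integrable_continuous_interval continuous_intros)
    also have "\<bar>\<dots>\<bar> \<le> integral {a..b} (\<lambda>r. ?w r * e)"
    proof -
      have "norm (integral {a..b} (\<lambda>r. ?w r * (h r - h a))) \<le> integral {a..b} (\<lambda>r. ?w r * e)"
      proof (rule integral_norm_bound_integral)
        show "(\<lambda>r. ?w r * (h r - h a)) integrable_on {a..b}" "(\<lambda>r. ?w r * e) integrable_on {a..b}"
          by (intro integrable_continuous_interval continuous_intros hab)+
        show "norm (?w r * (h r - h a)) \<le> ?w r * e" if "r \<in> {a..b}" for r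
          using osc that c_nonneg ab by (auto simp: abs_mult intro!: mult_left_mono)
      qed
      then show ?thesis by simp
    qed
    also have "\<dots> = e * ?vol"
      using const_w[of e] .
    finally show ?thesis .
  qed
  show ?thesis
    unfolding D_def using ball_diff interval_diff ball_err interval_err by linarith
qed

lemma integral_ball_radial:
  fixes f :: "'a::euclidean_space \<Rightarrow> real" and h :: "real \<Rightarrow> real"
  assumes hc: "continuous_on {0..R} h" and \<rho>: "0 \<le> \<rho>" "\<rho> \<le> R"
    and f: "\<And>x. x \<in> ball 0 \<rho> \<Longrightarrow> x \<noteq> 0 \<Longrightarrow> f x = h (norm x)"
  shows "integral (ball (0::'a) \<rho>) f
     = (real DIM('a) * measure lborel (ball (0::'a) 1)) * integral {0..\<rho>} (\<lambda>r. r^(DIM('a)-1) * h r)"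
proof -
  define c where "c = measure lborel (ball (0::'a) 1)"
  define D where "D = (\<lambda>t. integral (ball (0::'a) t) (\<lambda>x. h (norm x))
            - integral {0..t} (\<lambda>r. real DIM('a) * c * r^(DIM('a)-1) * h r))"
  have "D \<rho> = 0"
  proof (rule zero_if_increments_dominated[where D=D and g="\<lambda>t. 2 * c * t^DIM('a)"])
    show "D 0 = 0" by (simp add: D_def)
    show "0 \<le> \<rho>" by (rule \<rho>(1))
    fix e :: real assume e: "e > 0"
    obtain d where d: "d > 0"
      and close: "\<And>x x'. x \<in> {0..R} \<Longrightarrow> x' \<in> {0..R} \<Longrightarrow> dist x' x < d \<Longrightarrow> dist (h x') (h x) < e"
      using compact_uniformly_continuous[OF hc compact_Icc] e unfolding uniformly_continuous_on_def by metis
    have "\<bar>D b - D a\<bar> \<le> e * (2 * c * b^DIM('a) - 2 * c * a^DIM('a))"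
      if "0 \<le> a" "a \<le> b" "b \<le> \<rho>" "b - a < d" for a b
    proof -
      have "\<forall>r\<in>{a..b}. \<bar>h r - h a\<bar> \<le> e"
      proof
        fix r assume r: "r \<in> {a..b}"
        then have "dist (h r) (h a) < e"
          using that \<rho> by (intro close) (auto simp: dist_real_def)
        then show "\<bar>h r - h a\<bar> \<le> e"
          by (simp add: dist_real_def)
      qed
      from radial_integral_defect_increment[OF hc _ _ _ this] that \<rho> show ?thesis
        unfolding D_def c_def by (simp add: algebra_simps)
    qed
    then show "\<exists>d>0. \<forall>a b. 0 \<le> a \<longrightarrow> a \<le> b \<longrightarrow> b \<le> \<rho> \<longrightarrow> b - a < d
                  \<longrightarrow> \<bar>D b - D a\<bar> \<le> e * (2 * c * b^DIM('a) - 2 * c * a^DIM('a))"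
      using d by blast
  qed
  then have "integral (ball (0::'a) \<rho>) (\<lambda>x. h (norm x))
      = integral {0..\<rho>} (\<lambda>r. (real DIM('a) * c) * (r^(DIM('a)-1) * h r))"
    unfolding D_def by (simp add: mult.assoc)
  moreover have "integral (ball (0::'a) \<rho>) f = integral (ball (0::'a) \<rho>) (\<lambda>x. h (norm x))"
    by (rule integral_spike[of "{0}"]) (auto simp: f)
  ultimately show ?thesis
    unfolding c_def by simp
qed

lemma C1_grad_on_continuous:
  assumes "C1_grad_on S u du"
  shows "continuous_on S u" "continuous_on S du"
proof -
  show "continuous_on S du"
    using assms unfolding C1_grad_on_def by blast
  have "\<forall>x\<in>S. (u has_derivative (\<lambda>h. du x \<bullet> h)) (at x within S)"
    using assms unfolding C1_grad_on_def by blast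
  then show "continuous_on S u"
    unfolding continuous_on_eq_continuous_within using has_derivative_continuous by blast
qed

lemma C1_grad_on_has_derivative_at:
  assumes "C1_grad_on (cball 0 R) u du" "norm (x::'a::euclidean_space) < R"
  shows "(u has_derivative (\<lambda>h. du x \<bullet> h)) (at x)"
proof -
  have "(u has_derivative (\<lambda>h. du x \<bullet> h)) (at x within cball 0 R)"
    using assms unfolding C1_grad_on_def by simp
  moreover have "at x within cball 0 R = at x"
    using assms(2) by (intro at_within_interior) simp
  ultimately show ?thesis by simp
qed

lemma continuous_on_along_basis:
  fixes f :: "'a::euclidean_space \<Rightarrow> 'b::real_normed_vector"
  assumes "continuous_on (cball (0::'a) R) f" "e \<in> Basis"
  shows "continuous_on {0..R} (\<lambda>r. f (r *\<^sub>R e))"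
proof (rule continuous_on_compose2[OF assms(1)])
  show "continuous_on {0..R} (\<lambda>r. r *\<^sub>R e)"
    by (intro continuous_intros)
  show "(\<lambda>r. r *\<^sub>R e) ` {0..R} \<subseteq> cball 0 R"
    using assms(2) by (auto simp: norm_Basis)
qed

lemma radial_on_eq_along_basis:
  assumes "radial_on (cball 0 R) u" "e \<in> Basis" "norm (x::'a::euclidean_space) \<le> R"
  shows "u x = u (norm x *\<^sub>R e)"
proof -
  have n: "norm (norm x *\<^sub>R e) = norm x"
    using assms(2) by (simp add: norm_Basis)
  then have "x \<in> cball 0 R" "norm x *\<^sub>R e \<in> cball 0 R"
    using assms(3) by auto
  from assms(1)[unfolded radial_on_def, rule_format, OF this n[symmetric]] show ?thesis .
qed

lemma has_real_derivative_along_basis: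
  fixes u :: "'a::euclidean_space \<Rightarrow> real"
  assumes u: "C1_grad_on (cball 0 R) u du" and e: "e \<in> Basis" and r: "0 \<le> r" "r < R"
  shows "((\<lambda>s. u (s *\<^sub>R e)) has_real_derivative (du (r *\<^sub>R e) \<bullet> e)) (at r)"
proof -
  have "norm (r *\<^sub>R e) < R"
    using e r by (simp add: norm_Basis)
  from has_derivative_compose[OF bounded_linear_imp_has_derivative[OF bounded_linear_scaleR_left]
      C1_grad_on_has_derivative_at[OF u this]]
  have "((\<lambda>s. u (s *\<^sub>R e)) has_derivative (\<lambda>h. du (r *\<^sub>R e) \<bullet> (h *\<^sub>R e))) (at r)" .
  moreover have "(\<lambda>h. du (r *\<^sub>R e) \<bullet> (h *\<^sub>R e)) = (\<lambda>h. (du (r *\<^sub>R e) \<bullet> e) * h)"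
    by (rule ext) (simp only: inner_scaleR_right mult.commute)
  ultimately show ?thesis
    unfolding has_field_derivative_def by simp
qed

lemma radial_gradient:
  fixes u :: "'a::euclidean_space \<Rightarrow> real"
  assumes u: "C1_grad_on (cball 0 R) u du" and rad: "radial_on (cball 0 R) u"
    and e: "e \<in> Basis" and x: "x \<noteq> 0" "norm x < R"
  shows "du x = (du (norm x *\<^sub>R e) \<bullet> e) *\<^sub>R sgn x"
proof -
  let ?U = "\<lambda>s. u (s *\<^sub>R e)"
  let ?d = "du (norm x *\<^sub>R e) \<bullet> e"
  have "(?U has_derivative (\<lambda>h. ?d * h)) (at (norm x))"
    using has_real_derivative_along_basis[OF u e norm_ge_zero x(2)]
    by (rule has_field_derivative_imp_has_derivative)
  from has_derivative_compose[OF has_derivative_norm[OF x(1)] this]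
  have via_norm: "((\<lambda>y. ?U (norm y)) has_derivative (\<lambda>h. ?d * (h \<bullet> sgn x))) (at x)" .
  have direct: "((\<lambda>y. ?U (norm y)) has_derivative (\<lambda>h. du x \<bullet> h)) (at x)"
  proof (rule has_derivative_transform_within_open[OF C1_grad_on_has_derivative_at[OF u x(2)]])
    show "u y = ?U (norm y)" if "y \<in> ball 0 R" for y
      using radial_on_eq_along_basis[OF rad e, of y] that by simp
  qed (use x in auto)
  have "(\<lambda>h. ?d * (h \<bullet> sgn x)) = (\<lambda>h. du x \<bullet> h)"
    using has_derivative_unique[OF via_norm direct] .
  then have deriv_eq: "?d * (b \<bullet> sgn x) = du x \<bullet> b" for b
    by (rule fun_cong)
  show ?thesis
  proof (rule euclidean_eqI)
    fix b :: 'a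
    have "(?d *\<^sub>R sgn x) \<bullet> b = ?d * (b \<bullet> sgn x)"
      by (simp only: inner_scaleR_left inner_commute[of b])
    then show "du x \<bullet> b = (?d *\<^sub>R sgn x) \<bullet> b"
      using deriv_eq[of b] by simp
  qed
qed

lemma radial_gradient_component:
  fixes v :: "'a::euclidean_space \<Rightarrow> real"
  assumes v: "C1_grad_on (cball 0 R) v dv" and rad: "radial_on (cball 0 R) v"
    and e: "e \<in> Basis" and y: "y \<noteq> 0" "norm y < R"
  shows "dv y \<bullet> b = (dv (norm y *\<^sub>R e) \<bullet> e) * ((y \<bullet> b) / norm y)"
  using radial_gradient[OF v rad e y] by (simp add: sgn_div_norm divide_inverse mult_ac)

lemma has_real_derivative_radial_component:
  fixes f :: "real \<Rightarrow> real" and x b :: "'a::euclidean_space"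
  assumes f: "(f has_real_derivative f') (at (norm x))" and x: "x \<noteq> 0" and b: "b \<in> Basis"
  shows "((\<lambda>t. f (norm (x + t *\<^sub>R b)) * ((x \<bullet> b + t) / norm (x + t *\<^sub>R b))) has_real_derivative
      f' * (x \<bullet> b)^2 / (norm x)^2 + f (norm x) * ((norm x)^2 - (x \<bullet> b)^2) / (norm x)^3) (at 0)"
proof -
  define r where "r = norm x"
  have r: "r > 0"
    using x by (simp add: r_def)
  let ?N = "\<lambda>t::real. norm (x + t *\<^sub>R b)"
  have line: "((\<lambda>t. x + t *\<^sub>R b) has_derivative (\<lambda>h. h *\<^sub>R b)) (at 0)"
    by (auto intro!: derivative_eq_intros)
  have "(norm has_derivative (\<lambda>h. h \<bullet> sgn x)) (at ((\<lambda>t. x + t *\<^sub>R b) 0))"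
    using has_derivative_norm[OF x] by simp
  from has_derivative_compose[OF line this]
  have "(?N has_derivative (\<lambda>h. (h *\<^sub>R b) \<bullet> sgn x)) (at 0)" .
  moreover have "(\<lambda>h. (h *\<^sub>R b) \<bullet> sgn x) = (*) ((x \<bullet> b) / r)"
    by (rule ext) (simp add: sgn_div_norm r_def inner_commute[of b] divide_inverse mult_ac)
  ultimately have dN: "(?N has_real_derivative (x \<bullet> b) / r) (at 0)"
    unfolding has_field_derivative_def by (simp only:)
  have N0: "?N 0 = r"
    by (simp add: r_def)
  have df: "((\<lambda>t. f (?N t)) has_real_derivative f' * ((x \<bullet> b) / r)) (at 0)"
    using DERIV_chain2[OF _ dN] f N0 unfolding r_def by simp
  have dq: "((\<lambda>t. (x \<bullet> b + t) / ?N t) has_real_derivative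
      (r - (x \<bullet> b) * ((x \<bullet> b) / r)) / (r * r)) (at 0)"
    using DERIV_divide[OF DERIV_add[OF DERIV_const[of "x \<bullet> b"] DERIV_ident] dN] N0 r x by simp
  have "f' * ((x \<bullet> b) / r) * ((x \<bullet> b + 0) / ?N 0) + (r - (x \<bullet> b) * ((x \<bullet> b) / r)) / (r * r) * f (?N 0)
      = f' * (x \<bullet> b)^2 / r^2 + f r * (r^2 - (x \<bullet> b)^2) / r^3"
    using r unfolding N0 by (simp add: field_simps power2_eq_square power3_eq_cube)
  with DERIV_mult[OF df dq] show ?thesis
    unfolding r_def by simp
qed

lemma radial_hessian_diagonal:
  fixes v :: "'a::euclidean_space \<Rightarrow> real"
  assumes v: "C2_grad_on (cball 0 R) v dv hv" and rad: "radial_on (cball 0 R) v"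
    and e: "e \<in> Basis" and b: "b \<in> Basis" and x: "x \<noteq> 0" "norm x < R"
  shows "hv b x \<bullet> b = (hv e (norm x *\<^sub>R e) \<bullet> e) * (x \<bullet> b)^2 / (norm x)^2
     + (dv (norm x *\<^sub>R e) \<bullet> e) * ((norm x)^2 - (x \<bullet> b)^2) / (norm x)^3"
proof -
  define V1 where "V1 = (\<lambda>s. dv (s *\<^sub>R e) \<bullet> e)"
  have v1: "C1_grad_on (cball 0 R) v dv"
    using v unfolding C2_grad_on_def by blast
  have dv_c1: "C1_grad_on (cball 0 R) (\<lambda>y. dv y \<bullet> c) (hv c)" if "c \<in> Basis" for c
    using v that unfolding C2_grad_on_def by blast
  have dV1: "(V1 has_real_derivative (hv e (norm x *\<^sub>R e) \<bullet> e)) (at (norm x))"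
    unfolding V1_def using has_real_derivative_along_basis[OF dv_c1[OF e] e] x by simp
  have line: "((\<lambda>t. x + t *\<^sub>R b) has_derivative (\<lambda>h. h *\<^sub>R b)) (at 0)"
    by (auto intro!: derivative_eq_intros)
  have "norm (x + 0 *\<^sub>R b) < R"
    using x by simp
  from has_derivative_compose[OF line C1_grad_on_has_derivative_at[OF dv_c1[OF b] this]]
  have "((\<lambda>t. dv (x + t *\<^sub>R b) \<bullet> b) has_derivative (\<lambda>h. hv b (x + 0 *\<^sub>R b) \<bullet> (h *\<^sub>R b))) (at 0)" .
  moreover have "(\<lambda>h. hv b (x + 0 *\<^sub>R b) \<bullet> (h *\<^sub>R b)) = (*) (hv b x \<bullet> b)"
    by (rule ext) (simp only: scale_zero_left add_0_right inner_scaleR_right mult.commute)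
  ultimately have partial: "((\<lambda>t. dv (x + t *\<^sub>R b) \<bullet> b) has_real_derivative (hv b x \<bullet> b)) (at 0)"
    unfolding has_field_derivative_def by (simp only:)
  define \<delta> where "\<delta> = min (norm x) (R - norm x)"
  have along_line: "((\<lambda>t. V1 (norm (x + t *\<^sub>R b)) * ((x \<bullet> b + t) / norm (x + t *\<^sub>R b)))
      has_real_derivative (hv b x \<bullet> b)) (at 0)"
  proof (rule has_field_derivative_transform_within_open[OF partial, of "ball 0 \<delta>"])
    show "0 \<in> ball (0::real) \<delta>"
      using x by (simp add: \<delta>_def)
    fix t :: real assume t: "t \<in> ball 0 \<delta>"
    let ?y = "x + t *\<^sub>R b"
    have "norm ?y \<le> norm x + \<bar>t\<bar>" "norm x - \<bar>t\<bar> \<le> norm ?y"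
      using norm_triangle_ineq[of x "t *\<^sub>R b"] norm_triangle_ineq2[of x "- (t *\<^sub>R b)"] b by auto
    then have y: "?y \<noteq> 0" "norm ?y < R"
      using t by (auto simp: \<delta>_def)
    have "?y \<bullet> b = x \<bullet> b + t"
      using b by (simp add: inner_add_left)
    then show "dv ?y \<bullet> b = V1 (norm ?y) * ((x \<bullet> b + t) / norm ?y)"
      unfolding V1_def using radial_gradient_component[OF v1 rad e y] by simp
  qed simp
  show ?thesis
    using DERIV_unique[OF along_line has_real_derivative_radial_component[OF dV1 x(1) b]]
    unfolding V1_def by simp
qed

lemma radial_laplacian:
  fixes v :: "'a::euclidean_space \<Rightarrow> real"
  assumes v: "C2_grad_on (cball 0 R) v dv hv" and rad: "radial_on (cball 0 R) v"
    and e: "e \<in> Basis" and x: "x \<noteq> 0" "norm x < R"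
  shows "laplacian hv x = (hv e (norm x *\<^sub>R e) \<bullet> e)
     + (real DIM('a) - 1) * (dv (norm x *\<^sub>R e) \<bullet> e) / norm x"
proof -
  define r where "r = norm x"
  have r: "r > 0"
    using x by (simp add: r_def)
  define A where "A = hv e (norm x *\<^sub>R e) \<bullet> e"
  define B where "B = dv (norm x *\<^sub>R e) \<bullet> e"
  have "r^2 = x \<bullet> x"
    by (simp add: r_def power2_norm_eq_inner)
  also have "\<dots> = (\<Sum>b\<in>Basis. (x \<bullet> b) * (x \<bullet> b))"
    by (rule euclidean_inner)
  finally have sum_sq: "(\<Sum>b\<in>Basis. (x \<bullet> b)^2) = r^2"
    by (simp add: power2_eq_square)
  have "laplacian hv x = (\<Sum>b\<in>Basis. A / r^2 * (x \<bullet> b)^2 + B / r^3 * (r^2 - (x \<bullet> b)^2))"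
    unfolding laplacian_def A_def B_def r_def
    by (intro sum.cong refl) (simp add: radial_hessian_diagonal[OF v rad e _ x])
  also have "\<dots> = A / r^2 * (\<Sum>b\<in>Basis. (x \<bullet> b)^2) + B / r^3 * (\<Sum>b\<in>Basis. r^2 - (x \<bullet> b)^2)"
    by (simp only: sum.distrib sum_distrib_left)
  also have "\<dots> = A / r^2 * r^2 + B / r^3 * (real DIM('a) * r^2 - r^2)"
    unfolding sum_subtractf sum_sq by simp
  also have "\<dots> = A + (real DIM('a) - 1) * B / r"
    using r by (simp add: field_simps power2_eq_square power3_eq_cube)
  finally show ?thesis
    unfolding A_def B_def r_def .
qed

lemma young_mult_le:
  fixes x y e :: real
  assumes "e > 0"
  shows "x * y \<le> e * x^2 + y^2 / (4 * e)"
proof -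
  have "0 \<le> (2 * e * x - y)^2 / (4 * e)"
    using assms by simp
  also have "\<dots> = e * x^2 + y^2 / (4 * e) - x * y"
    using assms by (simp add: field_simps power2_eq_square)
  finally show ?thesis by simp
qed

lemma weighted_young_le:
  fixes w x y e K :: real
  assumes e: "e > 0" and w: "w \<ge> 0" and K: "y^2 \<le> K"
  shows "w * (x * y) \<le> e * w * x^2 + w * K / (4 * e)"
proof -
  have "w * (x * y) \<le> w * (e * x^2 + y^2 / (4 * e))"
    by (rule mult_left_mono[OF young_mult_le[OF e] w])
  also have "\<dots> \<le> w * (e * x^2 + K / (4 * e))"
    using K e w by (intro mult_left_mono add_left_mono divide_right_mono) auto
  finally show ?thesis
    by (simp add: algebra_simps)
qed

text \<open>Pointwise form of the Pohozaev identity: with \<open>w = r\<^sup>n\<^sup>-\<^sup>1\<close>, \<open>a = v'\<close>, \<open>c = v''\<close>,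
  \<open>s = \<surd>\<psi>(u)\<close>, the two subtracted groups are the derivatives of \<open>r\<^sup>n v'\<^sup>2/2\<close> and \<open>r\<^sup>n H(u)\<close>.\<close>
lemma pohozaev_pointwise_identity:
  fixes r u bt s N w a c V u1 ph Hu :: real
  assumes "r > 0" "u > 0" "bt > 0" "s = sqrt (u * bt)"
  shows "(N - 2) / 2 * w * a^2 = (c + (N - 1) * a / r - V + u) * (r * w) * a + (r * w) * V * a
    + (r * w) * (u / s) * (ph / s * u1 - s * a) + N * w * Hu
    - (N / 2 * w * a^2 + r * w * a * c) - (N * w * Hu + (r * w) * (ph / bt) * u1)"
proof -
  have s: "s > 0" "s * s = u * bt"
    using assms by auto
  have flux: "(r * w) * (u / s) * (ph / s * u1 - s * a) = (r * w) * (ph / bt) * u1 - r * w * u * a"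
    using s assms by (simp add: field_simps)
  show ?thesis
    unfolding flux using assms(1) by (simp add: field_simps power2_eq_square)
qed

lemma pohozaev_pointwise_bound:
  fixes r r0 R u bt ps s w a c Lp V u1 ph Hu Gu N e d L \<gamma> b :: real
  assumes r: "r > 0" "r \<le> r0" "r0 < R" and u: "u > 0" and bt: "bt > 0"
    and ps: "ps = u * bt" and s: "s = sqrt ps" and w: "w \<ge> 0"
    and e: "e > 0" and d: "d > 0"
    and HG: "Hu \<le> \<gamma> * Gu + b * (u + 1)" and psG: "u^2 / ps \<le> L * (Gu + u + 1)"
    and Lp: "Lp = c + (N - 1) * a / r" and N: "N \<ge> 0"
  shows "((N - 2) / 2 - 2 * e) * w * a^2 + (N / 2 * w * a^2 + r * w * a * c)
      + (N * w * Hu + (r * w) * (ph / bt) * u1)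
    \<le> (N * \<gamma> + d * L) * w * Gu + (R * r0 / (4 * e)) * w * (Lp - V + u)^2
      + (R * r0 / (4 * d)) * w * (ph / s * u1 - s * a)^2 + (R^2 / (4 * e)) * w * V^2
      + (N * b + d * L) * w * (u + 1)"
proof -
  define F where "F = Lp - V + u"
  define g where "g = ph / s * u1 - s * a"
  have s_pos: "s > 0"
    using s ps u bt by simp
  have identity: "(N - 2) / 2 * w * a^2 = F * (r * w) * a + (r * w) * V * a
    + (r * w) * (u / s) * g + N * w * Hu
    - (N / 2 * w * a^2 + r * w * a * c) - (N * w * Hu + (r * w) * (ph / bt) * u1)"
    unfolding F_def g_def Lp by (rule pohozaev_pointwise_identity[OF r(1) u bt]) (simp add: s ps)
  have r_sq: "r^2 \<le> R * r0" "r^2 \<le> R^2"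
    using r by (auto simp: power2_eq_square intro: mult_mono)
  have F_term: "w * (a * (r * F)) \<le> e * w * a^2 + w * (R * r0 * F^2) / (4 * e)"
    using r_sq by (intro weighted_young_le[OF e w]) (simp add: power_mult_distrib mult_right_mono)
  have V_term: "w * (a * (r * V)) \<le> e * w * a^2 + w * (R^2 * V^2) / (4 * e)"
    using r_sq by (intro weighted_young_le[OF e w]) (simp add: power_mult_distrib mult_right_mono)
  have g_term: "w * ((u / s) * (r * g)) \<le> d * w * (u / s)^2 + w * (R * r0 * g^2) / (4 * d)"
    using r_sq by (intro weighted_young_le[OF d w]) (simp add: power_mult_distrib mult_right_mono)
  have "(u / s)^2 = u^2 / ps"
    using s ps u bt by (simp add: power_divide)
  then have us_term: "d * w * (u / s)^2 \<le> d * w * (L * (Gu + u + 1))"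
    using mult_left_mono[OF psG, of "d * w"] d w by simp
  have H_term: "N * w * Hu \<le> N * w * (\<gamma> * Gu + b * (u + 1))"
    using HG N w by (simp add: mult_left_mono)
  have "((N - 2) / 2 - 2 * e) * w * a^2 + (N / 2 * w * a^2 + r * w * a * c)
      + (N * w * Hu + (r * w) * (ph / bt) * u1)
      = w * (a * (r * F)) + w * (a * (r * V)) + w * ((u / s) * (r * g)) + N * w * Hu - 2 * e * w * a^2"
    using identity by (simp add: algebra_simps)
  also have "\<dots> \<le> (N * \<gamma> + d * L) * w * Gu + (R * r0 / (4 * e)) * w * F^2
      + (R * r0 / (4 * d)) * w * g^2 + (R^2 / (4 * e)) * w * V^2 + (N * b + d * L) * w * (u + 1)"
    using F_term V_term g_term us_term H_term by (simp add: algebra_simps)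
  finally show ?thesis
    unfolding F_def g_def .
qed

lemma continuous_on_flux:
  fixes U U1 V1 \<phi> \<beta> \<psi> :: "real \<Rightarrow> real"
  assumes cU: "continuous_on S U" and cU1: "continuous_on S U1" and cV1: "continuous_on S V1"
    and c\<phi>: "continuous_on {0..} \<phi>" and c\<beta>: "continuous_on {0..} \<beta>"
    and \<beta>_pos: "\<forall>s\<ge>0. \<beta> s > 0" and \<psi>: "\<forall>s\<ge>0. \<psi> s = s * \<beta> s"
    and U_pos: "\<forall>r\<in>S. U r > 0"
  shows "continuous_on S (\<lambda>r. \<phi> (U r) / sqrt (\<psi> (U r)) * U1 r - sqrt (\<psi> (U r)) * V1 r)"
proof -
  have U_img: "U ` S \<subseteq> {0..}"
    using U_pos by (auto simp: less_imp_le)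
  have \<psi>U: "\<psi> (U r) = U r * \<beta> (U r)" and \<psi>U_pos: "\<psi> (U r) > 0" if "r \<in> S" for r
    using \<psi> \<beta>_pos U_pos that by (auto simp: less_imp_le)
  have "continuous_on S (\<lambda>r. U r * \<beta> (U r))"
    by (intro continuous_intros cU continuous_on_compose2[OF c\<beta> cU U_img])
  then have "continuous_on S (\<lambda>r. \<psi> (U r))"
    by (rule continuous_on_eq) (simp add: \<psi>U)
  then show ?thesis
    using \<psi>U_pos
    by (intro continuous_intros continuous_on_compose2[OF c\<phi> cU U_img] cU1 cV1) (auto simp: less_imp_neq[symmetric])
qed

lemma has_integral_power_mult_derivative:
  fixes f f' :: "real \<Rightarrow> real"
  assumes n: "n \<ge> 1" and r0: "0 \<le> r0" and f: "continuous_on {0..r0} f"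
    and f': "\<And>r. r \<in> {0<..<r0} \<Longrightarrow> (f has_real_derivative f' r) (at r)"
  shows "((\<lambda>r. real n * r^(n-1) * f r + r^n * f' r) has_integral r0^n * f r0) {0..r0}"
proof -
  have "((\<lambda>r. real n * r^(n-1) * f r + r^n * f' r) has_integral r0^n * f r0 - 0^n * f 0) {0..r0}"
  proof (rule fundamental_theorem_of_calculus_interior[OF r0])
    show "continuous_on {0..r0} (\<lambda>r. r^n * f r)"
      by (intro continuous_intros f)
    show "((\<lambda>r. r^n * f r) has_vector_derivative real n * r^(n-1) * f r + r^n * f' r) (at r)"
      if "r \<in> {0<..<r0}" for r
      using DERIV_mult[OF DERIV_pow f'[OF that]]
      by (simp add: has_real_derivative_iff_has_vector_derivative[symmetric] algebra_simps)
  qed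
  then show ?thesis
    using n by (simp add: power_0_left)
qed

lemma radial_pohozaev_local:
  fixes U U1 V V1 V2 Lp \<phi> \<beta> \<psi> G H :: "real \<Rightarrow> real" and n :: nat
  assumes n: "n \<ge> 2" and r0: "0 < r0" "r0 < R"
    and cU: "continuous_on {0..R} U" and cU1: "continuous_on {0..R} U1"
    and cV: "continuous_on {0..R} V" and cV1: "continuous_on {0..R} V1"
    and cV2: "continuous_on {0..R} V2" and cLp: "continuous_on {0..R} Lp"
    and cG: "continuous_on {0..R} (\<lambda>r. G (U r))"
    and U_pos: "\<forall>r\<in>{0..R}. U r > 0"
    and dU: "\<forall>r\<in>{0<..<R}. (U has_real_derivative U1 r) (at r)"
    and dV1: "\<forall>r\<in>{0<..<R}. (V1 has_real_derivative V2 r) (at r)"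
    and Lp: "\<forall>r\<in>{0<..<R}. Lp r = V2 r + (real n - 1) * V1 r / r"
    and c\<phi>: "continuous_on {0..} \<phi>" and c\<beta>: "continuous_on {0..} \<beta>"
    and \<beta>_pos: "\<forall>s\<ge>0. \<beta> s > 0" and \<psi>: "\<forall>s\<ge>0. \<psi> s = s * \<beta> s"
    and dH: "\<forall>s>0. (H has_real_derivative \<phi> s / \<beta> s) (at s)" and H_nonneg: "\<forall>s>0. H s \<ge> 0"
    and HG: "\<forall>s>0. H s \<le> \<gamma> * G s + b * (s + 1)"
    and \<psi>G: "\<forall>s>0. s^2 / \<psi> s \<le> L * (G s + s + 1)"
    and e: "e > 0" and d: "d > 0"
  shows "((real n - 2) / 2 - 2 * e) * integral {0..r0} (\<lambda>r. r^(n-1) * (V1 r)^2)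
     \<le> (real n * \<gamma> + d * L) * integral {0..r0} (\<lambda>r. r^(n-1) * G (U r))
       + R * r0 / (4 * e) * integral {0..r0} (\<lambda>r. r^(n-1) * (Lp r - V r + U r)^2)
       + R * r0 / (4 * d) * integral {0..r0}
           (\<lambda>r. r^(n-1) * (\<phi> (U r) / sqrt (\<psi> (U r)) * U1 r - sqrt (\<psi> (U r)) * V1 r)^2)
       + R^2 / (4 * e) * integral {0..r0} (\<lambda>r. r^(n-1) * (V r)^2)
       + (real n * b + d * L) * integral {0..r0} (\<lambda>r. r^(n-1) * (U r + 1))"
proof -
  define N where "N = real n"
  define w where "w r = r^(n-1)" for r :: real
  define F where "F r = Lp r - V r + U r" for r
  define g where "g r = \<phi> (U r) / sqrt (\<psi> (U r)) * U1 r - sqrt (\<psi> (U r)) * V1 r" for r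
  have \<beta>U_pos: "\<beta> (U r) > 0" and \<psi>U: "\<psi> (U r) = U r * \<beta> (U r)" if "r \<in> {0..R}" for r
    using \<beta>_pos \<psi> U_pos that by (auto simp: less_imp_le)
  have "continuous_on {0<..} H"
    using dH by (intro DERIV_continuous_on[where D="\<lambda>s. \<phi> s / \<beta> s"]) (auto intro: has_field_derivative_at_within)
  then have cHU: "continuous_on {0..R} (\<lambda>r. H (U r))"
    using U_pos by (intro continuous_on_compose2[OF _ cU]) auto
  have cg: "continuous_on {0..R} g"
    unfolding g_def using continuous_on_flux[OF cU cU1 cV1 c\<phi> c\<beta> \<beta>_pos \<psi> U_pos] .
  have cF: "continuous_on {0..R} F"
    unfolding F_def by (intro continuous_intros cLp cV cU)
  have int: "f integrable_on {0..r0}" if "continuous_on {0..R} f" for f :: "real \<Rightarrow> real"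
    using that r0 by (intro integrable_continuous_interval continuous_on_subset[OF that]) auto
  have r0_sub: "{0<..<r0} \<subseteq> {0<..<R}" "{0..r0} \<subseteq> {0..R}"
    using r0 by auto
  txt \<open>The two exact derivatives of the Pohozaev identity; their values at \<open>r0\<close> are nonnegative.\<close>
  have P1: "((\<lambda>r. N * w r * ((V1 r)^2 / 2) + r^n * (V1 r * V2 r)) has_integral r0^n * ((V1 r0)^2 / 2)) {0..r0}"
    unfolding N_def w_def using n r0 r0_sub dV1
    by (intro has_integral_power_mult_derivative continuous_intros continuous_on_subset[OF cV1])
       (auto intro!: derivative_eq_intros)
  have P2: "((\<lambda>r. N * w r * H (U r) + r^n * (\<phi> (U r) / \<beta> (U r) * U1 r)) has_integral r0^n * H (U r0)) {0..r0}"
    unfolding N_def w_def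
  proof (rule has_integral_power_mult_derivative)
    show "continuous_on {0..r0} (\<lambda>r. H (U r))"
      using continuous_on_subset[OF cHU r0_sub(2)] .
    show "((\<lambda>r. H (U r)) has_real_derivative \<phi> (U r) / \<beta> (U r) * U1 r) (at r)" if "r \<in> {0<..<r0}" for r
    proof (rule DERIV_chain2[where f=H and g=U])
      show "(H has_real_derivative \<phi> (U r) / \<beta> (U r)) (at (U r))"
        using dH U_pos that r0_sub by auto
      show "(U has_real_derivative U1 r) (at r)"
        using dU that r0_sub by auto
    qed
  qed (use n r0 in auto)
  let ?c0 = "(N - 2) / 2 - 2 * e"
  let ?K = "N * \<gamma> + d * L"
  have pointwise: "?c0 * (w r * (V1 r)^2)
        + (N * w r * ((V1 r)^2 / 2) + r^n * (V1 r * V2 r))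
        + (N * w r * H (U r) + r^n * (\<phi> (U r) / \<beta> (U r) * U1 r))
      \<le> ?K * (w r * G (U r)) + R * r0 / (4 * e) * (w r * (F r)^2) + R * r0 / (4 * d) * (w r * (g r)^2)
        + R^2 / (4 * e) * (w r * (V r)^2) + (N * b + d * L) * (w r * (U r + 1))" if r: "r \<in> {0..r0}" for r
  proof (cases "r = 0")
    case True
    then show ?thesis using n by (simp add: w_def power_0_left)
  next
    case False
    then have r_pos: "r > 0" and rR: "r \<in> {0..R}" "r \<in> {0<..<R}"
      using r r0 by auto
    have rn: "r^n = r * w r"
      using n by (simp add: w_def power_eq_if[of r n])
    have "?c0 * w r * (V1 r)^2 + (N / 2 * w r * (V1 r)^2 + r * w r * V1 r * V2 r)
        + (N * w r * H (U r) + (r * w r) * (\<phi> (U r) / \<beta> (U r)) * U1 r)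
      \<le> ?K * w r * G (U r) + (R * r0 / (4 * e)) * w r * (F r)^2 + (R * r0 / (4 * d)) * w r * (g r)^2
        + (R^2 / (4 * e)) * w r * (V r)^2 + (N * b + d * L) * w r * (U r + 1)"
      unfolding F_def g_def
      using r_pos r r0 U_pos rR \<beta>U_pos[OF rR(1)] \<psi>U[OF rR(1)] e d
        HG[rule_format, of "U r"] \<psi>G[rule_format, of "U r"] Lp[rule_format, OF rR(2)]
      by (intro pohozaev_pointwise_bound) (auto simp: N_def w_def)
    then show ?thesis
      unfolding rn by (simp add: algebra_simps)
  qed
  have int_w: "(\<lambda>r. w r * f r) integrable_on {0..r0}" if "continuous_on {0..R} f" for f
    unfolding w_def by (intro int continuous_intros that)
  have lhs: "((\<lambda>r. ?c0 * (w r * (V1 r)^2)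
        + (N * w r * ((V1 r)^2 / 2) + r^n * (V1 r * V2 r))
        + (N * w r * H (U r) + r^n * (\<phi> (U r) / \<beta> (U r) * U1 r)))
      has_integral ?c0 * integral {0..r0} (\<lambda>r. w r * (V1 r)^2) + r0^n * ((V1 r0)^2 / 2) + r0^n * H (U r0))
      {0..r0}"
    by (intro has_integral_add has_integral_mult_right integrable_integral int_w P1 P2 continuous_intros cV1)
  have rhs: "((\<lambda>r. ?K * (w r * G (U r)) + R * r0 / (4 * e) * (w r * (F r)^2) + R * r0 / (4 * d) * (w r * (g r)^2)
        + R^2 / (4 * e) * (w r * (V r)^2) + (N * b + d * L) * (w r * (U r + 1)))
      has_integral ?K * integral {0..r0} (\<lambda>r. w r * G (U r))
        + R * r0 / (4 * e) * integral {0..r0} (\<lambda>r. w r * (F r)^2)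
        + R * r0 / (4 * d) * integral {0..r0} (\<lambda>r. w r * (g r)^2)
        + R^2 / (4 * e) * integral {0..r0} (\<lambda>r. w r * (V r)^2)
        + (N * b + d * L) * integral {0..r0} (\<lambda>r. w r * (U r + 1))) {0..r0}"
    by (intro has_integral_add has_integral_mult_right integrable_integral int_w continuous_intros cG cF cg cV cU)
  note has_integral_le[OF lhs rhs pointwise]
  moreover have "r0^n * ((V1 r0)^2 / 2) \<ge> 0" "r0^n * H (U r0) \<ge> 0"
    using r0 H_nonneg U_pos by auto
  ultimately show ?thesis
    unfolding N_def w_def F_def g_def by linarith
qed

lemma integral_mono_Icc_right:
  fixes f :: "real \<Rightarrow> real"
  assumes "continuous_on {0..R} f" "\<forall>r\<in>{0..R}. f r \<ge> 0" "0 \<le> r0" "r0 \<le> R"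
  shows "integral {0..r0} f \<le> integral {0..R} f"
  using assms
  by (intro integral_subset_le integrable_continuous_interval continuous_on_subset[OF assms(1)]) auto

lemma integral_Icc_le_shifted_extension:
  fixes f h :: "real \<Rightarrow> real"
  assumes f: "continuous_on {0..R} f" and h: "continuous_on {0..R} h"
    and shift: "\<forall>r\<in>{0..R}. f r + k * h r \<ge> 0" and h_nonneg: "\<forall>r\<in>{0..R}. h r \<ge> 0"
    and k: "k \<ge> 0" and r0: "0 \<le> r0" "r0 \<le> R"
  shows "integral {0..r0} f \<le> integral {0..R} f + k * integral {0..R} h"
proof -
  have int: "g integrable_on {0..t}" if "continuous_on {0..R} g" "t \<le> R" for g :: "real \<Rightarrow> real" and t
    using that by (intro integrable_continuous_interval continuous_on_subset[OF that(1)]) auto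
  have "integral {0..r0} f + k * integral {0..r0} h = integral {0..r0} (\<lambda>r. f r + k * h r)"
    unfolding integral_add[OF int[OF f r0(2)] integrable_on_mult_right[OF int[OF h r0(2)]]]
      integral_mult_right ..
  also have "\<dots> \<le> integral {0..R} (\<lambda>r. f r + k * h r)"
    using shift r0 by (intro integral_mono_Icc_right continuous_intros f h) auto
  also have "\<dots> = integral {0..R} f + k * integral {0..R} h"
    unfolding integral_add[OF int[OF f order_refl] integrable_on_mult_right[OF int[OF h order_refl]]]
      integral_mult_right ..
  finally have "integral {0..r0} f + k * integral {0..r0} h \<le> integral {0..R} f + k * integral {0..R} h" .
  moreover have "k * integral {0..r0} h \<ge> 0"
    using k h_nonneg r0 int[OF h r0(2)] by (intro mult_nonneg_nonneg integral_nonneg) auto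
  ultimately show ?thesis
    by linarith
qed

text \<open>\<open>\<eta> = n - 2 - n\<gamma> > 0\<close> is the room left by \<open>\<gamma> < (n - 2)/n\<close>; the Young parameters
  \<open>e = \<eta>/8\<close>, \<open>d = \<eta>/(4L)\<close> spend a quarter of it each, which keeps \<open>\<mu> < 2\<close>.\<close>
definition pohozaev_mu :: "nat \<Rightarrow> real \<Rightarrow> real" where
  "pohozaev_mu n \<gamma> = (real n * \<gamma> + (real n - 2 - real n * \<gamma>) / 4)
     / ((real n - 2) / 2 - (real n - 2 - real n * \<gamma>) / 4)"

definition pohozaev_const :: "nat \<Rightarrow> real \<Rightarrow> real \<Rightarrow> real \<Rightarrow> real \<Rightarrow> real \<Rightarrow> real \<Rightarrow> real" where
  "pohozaev_const n \<gamma> b L R Mu W = (let \<eta> = real n - 2 - real n * \<gamma>; e = \<eta> / 8; d = \<eta> / (4 * L);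
      c0 = (real n - 2) / 2 - 2 * e; K = real n * \<gamma> + d * L in
      (R / (4 * e) + R / (4 * d) + R^2 / (4 * e) + (K * b / \<gamma> + real n * b + d * L) * (Mu + W)) / c0 + 1)"

lemma pohozaev_mu_bounds:
  assumes "0 < \<gamma>" "real n * \<gamma> < real n - 2"
  shows "0 < pohozaev_mu n \<gamma>" "pohozaev_mu n \<gamma> < 2"
proof -
  define \<eta> where "\<eta> = real n - 2 - real n * \<gamma>"
  have "n > 0"
    using assms by (cases n) auto
  then have \<eta>: "\<eta> > 0" "real n * \<gamma> > 0"
    using assms by (auto simp: \<eta>_def)
  have c0: "(real n - 2) / 2 - \<eta> / 4 > 0"
    using \<eta> assms by (simp add: \<eta>_def)
  show "0 < pohozaev_mu n \<gamma>"
    unfolding pohozaev_mu_def \<eta>_def[symmetric] using c0 \<eta> by simp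
  have "real n * \<gamma> + \<eta> / 4 < 2 * ((real n - 2) / 2 - \<eta> / 4)"
    using \<eta>(1) unfolding \<eta>_def by (simp add: field_simps)
  then show "pohozaev_mu n \<gamma> < 2"
    unfolding pohozaev_mu_def \<eta>_def[symmetric] using c0 by (simp add: divide_less_eq)
qed

lemma pohozaev_const_ge_1:
  assumes "0 < \<gamma>" "real n * \<gamma> < real n - 2" "b > 0" "L > 0" "R > 0" "Mu + W \<ge> 0"
  shows "pohozaev_const n \<gamma> b L R Mu W \<ge> 1"
proof -
  define \<eta> where "\<eta> = real n - 2 - real n * \<gamma>"
  have "n > 0"
    using assms by (cases n) auto
  then have \<eta>: "\<eta> > 0" "real n * \<gamma> > 0"
    using assms by (auto simp: \<eta>_def)
  then have "((real n * \<gamma> + \<eta> / (4 * L) * L) * b / \<gamma> + real n * b + \<eta> / (4 * L) * L) \<ge> 0"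
    using assms by (intro add_nonneg_nonneg) auto
  from mult_nonneg_nonneg[OF this assms(6)]
  have "(R / (4 * (\<eta> / 8)) + R / (4 * (\<eta> / (4 * L))) + R^2 / (4 * (\<eta> / 8))
      + ((real n * \<gamma> + \<eta> / (4 * L) * L) * b / \<gamma> + real n * b + \<eta> / (4 * L) * L) * (Mu + W))
      / ((real n - 2) / 2 - 2 * (\<eta> / 8)) \<ge> 0"
    using assms \<eta> by (intro divide_nonneg_pos add_nonneg_nonneg) (auto simp: \<eta>_def)
  then show ?thesis
    unfolding pohozaev_const_def Let_def \<eta>_def[symmetric] by simp
qed

lemma radial_pohozaev_extended:
  fixes U U1 V V1 V2 Lp \<phi> \<beta> \<psi> G H :: "real \<Rightarrow> real" and n :: nat
  assumes n: "n \<ge> 2" and r0: "0 < r0" "r0 < R"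
    and cU: "continuous_on {0..R} U" and cU1: "continuous_on {0..R} U1"
    and cV: "continuous_on {0..R} V" and cV1: "continuous_on {0..R} V1"
    and cV2: "continuous_on {0..R} V2" and cLp: "continuous_on {0..R} Lp"
    and cG: "continuous_on {0..R} (\<lambda>r. G (U r))"
    and U_pos: "\<forall>r\<in>{0..R}. U r > 0"
    and dU: "\<forall>r\<in>{0<..<R}. (U has_real_derivative U1 r) (at r)"
    and dV1: "\<forall>r\<in>{0<..<R}. (V1 has_real_derivative V2 r) (at r)"
    and Lp: "\<forall>r\<in>{0<..<R}. Lp r = V2 r + (real n - 1) * V1 r / r"
    and c\<phi>: "continuous_on {0..} \<phi>" and c\<beta>: "continuous_on {0..} \<beta>"
    and \<beta>_pos: "\<forall>s\<ge>0. \<beta> s > 0" and \<psi>: "\<forall>s\<ge>0. \<psi> s = s * \<beta> s"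
    and dH: "\<forall>s>0. (H has_real_derivative \<phi> s / \<beta> s) (at s)" and H_nonneg: "\<forall>s>0. H s \<ge> 0"
    and HG: "\<forall>s>0. H s \<le> \<gamma> * G s + b * (s + 1)"
    and \<psi>G: "\<forall>s>0. s^2 / \<psi> s \<le> L * (G s + s + 1)"
    and \<gamma>: "\<gamma> > 0" and b: "b > 0" and L: "L > 0" and e: "e > 0" and d: "d > 0"
  shows "((real n - 2) / 2 - 2 * e) * integral {0..r0} (\<lambda>r. r^(n-1) * (V1 r)^2)
     \<le> (real n * \<gamma> + d * L) * integral {0..R} (\<lambda>r. r^(n-1) * G (U r))
       + R * r0 / (4 * e) * integral {0..R} (\<lambda>r. r^(n-1) * (Lp r - V r + U r)^2)
       + R * r0 / (4 * d) * integral {0..R}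
           (\<lambda>r. r^(n-1) * (\<phi> (U r) / sqrt (\<psi> (U r)) * U1 r - sqrt (\<psi> (U r)) * V1 r)^2)
       + R^2 / (4 * e) * integral {0..R} (\<lambda>r. r^(n-1) * (V r)^2)
       + ((real n * \<gamma> + d * L) * (b / \<gamma>) + real n * b + d * L) * integral {0..R} (\<lambda>r. r^(n-1) * (U r + 1))"
proof -
  define N where "N = real n"
  define w where "w r = r^(n-1)" for r :: real
  define c0 where "c0 = (N - 2) / 2 - 2 * e"
  define K where "K = N * \<gamma> + d * L"
  define k where "k = b / \<gamma>"
  define F where "F r = Lp r - V r + U r" for r
  define g where "g r = \<phi> (U r) / sqrt (\<psi> (U r)) * U1 r - sqrt (\<psi> (U r)) * V1 r" for r
  define J where "J t f = integral {0..t} (\<lambda>r. w r * f r)" for t and f :: "real \<Rightarrow> real"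
  have k: "k > 0" and K: "K > 0"
    using \<gamma> b d L by (auto simp: k_def K_def N_def intro!: add_nonneg_pos)
  have extend: "J r0 f \<le> J R f" if "continuous_on {0..R} f" "\<forall>r\<in>{0..R}. f r \<ge> 0" for f
    unfolding J_def w_def using that r0
    by (intro integral_mono_Icc_right continuous_intros) auto
  have cF: "continuous_on {0..R} F"
    unfolding F_def by (intro continuous_intros cLp cV cU)
  have cg: "continuous_on {0..R} g"
    unfolding g_def using continuous_on_flux[OF cU cU1 cV1 c\<phi> c\<beta> \<beta>_pos \<psi> U_pos] .
  have local: "c0 * J r0 (\<lambda>r. (V1 r)^2) \<le> K * J r0 (\<lambda>r. G (U r)) + R * r0 / (4 * e) * J r0 (\<lambda>r. (F r)^2)
      + R * r0 / (4 * d) * J r0 (\<lambda>r. (g r)^2) + R^2 / (4 * e) * J r0 (\<lambda>r. (V r)^2)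
      + (N * b + d * L) * J r0 (\<lambda>r. U r + 1)"
    using radial_pohozaev_local[OF n r0 cU cU1 cV cV1 cV2 cLp cG U_pos dU dV1 Lp c\<phi> c\<beta> \<beta>_pos \<psi> dH H_nonneg
        HG \<psi>G e d]
    unfolding J_def w_def F_def g_def c0_def K_def N_def .
  text \<open>\<open>G\<close> may be negative, so its integral is extended to \<open>[0, R]\<close> after shifting by \<open>k (U + 1)\<close>,
    which is nonnegative by the hypothesis relating \<open>H\<close> and \<open>G\<close>.\<close>
  have G_shift: "\<forall>r\<in>{0..R}. w r * G (U r) + k * (w r * (U r + 1)) \<ge> 0"
  proof
    fix r assume r: "r \<in> {0..R}"
    have "0 \<le> \<gamma> * G (U r) + b * (U r + 1)"
      using HG H_nonneg U_pos r by (meson order_trans)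
    then have "G (U r) + k * (U r + 1) \<ge> 0"
      using \<gamma> by (simp add: k_def field_simps)
    moreover have "w r \<ge> 0"
      using r by (simp add: w_def)
    ultimately have "w r * (G (U r) + k * (U r + 1)) \<ge> 0"
      by simp
    then show "w r * G (U r) + k * (w r * (U r + 1)) \<ge> 0"
      by (simp add: algebra_simps)
  qed
  have JG: "J r0 (\<lambda>r. G (U r)) \<le> J R (\<lambda>r. G (U r)) + k * J R (\<lambda>r. U r + 1)"
  proof -
    have "continuous_on {0..R} (\<lambda>r. w r * G (U r))" "continuous_on {0..R} (\<lambda>r. w r * (U r + 1))"
      unfolding w_def by (intro continuous_intros cG cU)+
    moreover have "\<forall>r\<in>{0..R}. w r * (U r + 1) \<ge> 0"
      using U_pos by (auto simp: w_def less_imp_le)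
    ultimately show ?thesis
      unfolding J_def by (rule integral_Icc_le_shifted_extension[OF _ _ G_shift]) (use k r0 in auto)
  qed
  have ext_U: "J r0 (\<lambda>r. U r + 1) \<le> J R (\<lambda>r. U r + 1)"
    using U_pos by (intro extend continuous_intros cU) (auto simp: less_imp_le)
  have "R * r0 / (4 * e) * J r0 (\<lambda>r. (F r)^2) \<le> R * r0 / (4 * e) * J R (\<lambda>r. (F r)^2)"
    "R * r0 / (4 * d) * J r0 (\<lambda>r. (g r)^2) \<le> R * r0 / (4 * d) * J R (\<lambda>r. (g r)^2)"
    "R^2 / (4 * e) * J r0 (\<lambda>r. (V r)^2) \<le> R^2 / (4 * e) * J R (\<lambda>r. (V r)^2)"
    using r0 e d by (intro mult_left_mono extend continuous_intros cF cg cV; simp)+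
  moreover have "(N * b + d * L) * J r0 (\<lambda>r. U r + 1) \<le> (N * b + d * L) * J R (\<lambda>r. U r + 1)"
    using b d L by (intro mult_left_mono[OF ext_U]) (simp add: N_def)
  moreover have "K * J r0 (\<lambda>r. G (U r)) \<le> K * J R (\<lambda>r. G (U r)) + K * k * J R (\<lambda>r. U r + 1)"
    using mult_left_mono[OF JG, of K] K by (simp add: algebra_simps)
  ultimately have "c0 * J r0 (\<lambda>r. (V1 r)^2) \<le> K * J R (\<lambda>r. G (U r)) + R * r0 / (4 * e) * J R (\<lambda>r. (F r)^2)
      + R * r0 / (4 * d) * J R (\<lambda>r. (g r)^2) + R^2 / (4 * e) * J R (\<lambda>r. (V r)^2)
      + (K * k + N * b + d * L) * J R (\<lambda>r. U r + 1)"
    using local by (simp add: algebra_simps)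
  then show ?thesis
    unfolding J_def w_def F_def g_def c0_def K_def k_def N_def .
qed


lemma radial_pohozaev_estimate:
  fixes U U1 V V1 V2 Lp \<phi> \<beta> \<psi> G H :: "real \<Rightarrow> real" and n :: nat
  assumes r0: "0 < r0" "r0 < R"
    and cU: "continuous_on {0..R} U" and cU1: "continuous_on {0..R} U1"
    and cV: "continuous_on {0..R} V" and cV1: "continuous_on {0..R} V1"
    and cV2: "continuous_on {0..R} V2" and cLp: "continuous_on {0..R} Lp"
    and cG: "continuous_on {0..R} (\<lambda>r. G (U r))"
    and U_pos: "\<forall>r\<in>{0..R}. U r > 0"
    and dU: "\<forall>r\<in>{0<..<R}. (U has_real_derivative U1 r) (at r)"
    and dV1: "\<forall>r\<in>{0<..<R}. (V1 has_real_derivative V2 r) (at r)"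
    and Lp: "\<forall>r\<in>{0<..<R}. Lp r = V2 r + (real n - 1) * V1 r / r"
    and c\<phi>: "continuous_on {0..} \<phi>" and c\<beta>: "continuous_on {0..} \<beta>"
    and \<beta>_pos: "\<forall>s\<ge>0. \<beta> s > 0" and \<psi>: "\<forall>s\<ge>0. \<psi> s = s * \<beta> s"
    and dH: "\<forall>s>0. (H has_real_derivative \<phi> s / \<beta> s) (at s)" and H_nonneg: "\<forall>s>0. H s \<ge> 0"
    and \<gamma>: "0 < \<gamma>" "real n * \<gamma> < real n - 2"
    and HG: "\<forall>s>0. H s \<le> \<gamma> * G s + b * (s + 1)"
    and \<psi>G: "\<forall>s>0. s^2 / \<psi> s \<le> L * (G s + s + 1)"
    and b: "b > 0" and L: "L > 0"
  shows "integral {0..r0} (\<lambda>r. r^(n-1) * (V1 r)^2)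
     \<le> pohozaev_mu n \<gamma> * integral {0..R} (\<lambda>r. r^(n-1) * G (U r))
       + pohozaev_const n \<gamma> b L R (integral {0..R} (\<lambda>r. r^(n-1) * U r)) (integral {0..R} (\<lambda>r. r^(n-1)))
         * (r0 * integral {0..R} (\<lambda>r. r^(n-1) * (Lp r - V r + U r)^2)
            + r0 * integral {0..R}
                (\<lambda>r. r^(n-1) * (\<phi> (U r) / sqrt (\<psi> (U r)) * U1 r - sqrt (\<psi> (U r)) * V1 r)^2)
            + integral {0..R} (\<lambda>r. r^(n-1) * (V r)^2) + 1)"
proof -
  define N where "N = real n"
  define w where "w r = r^(n-1)" for r :: real
  define \<eta> where "\<eta> = N - 2 - N * \<gamma>"
  define e where "e = \<eta> / 8"
  define d where "d = \<eta> / (4 * L)"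
  define c0 where "c0 = (N - 2) / 2 - 2 * e"
  define K where "K = N * \<gamma> + d * L"
  define J where "J f = integral {0..R} (\<lambda>r. w r * f r)" for f :: "real \<Rightarrow> real"
  define JF where "JF = J (\<lambda>r. (Lp r - V r + U r)^2)"
  define Jg where "Jg = J (\<lambda>r. (\<phi> (U r) / sqrt (\<psi> (U r)) * U1 r - sqrt (\<psi> (U r)) * V1 r)^2)"
  define JV where "JV = J (\<lambda>r. (V r)^2)"
  define A where "A = R / (4 * e)"
  define B where "B = R / (4 * d)"
  define C where "C = R^2 / (4 * e)"
  define P where "P = (K * (b / \<gamma>) + N * b + d * L) * J (\<lambda>r. U r + 1)"
  define T where "T = A + B + C + P"
  have n: "n \<ge> 2"
    using \<gamma> by (cases "n \<ge> 2") (auto simp: not_le less_2_cases_iff)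
  have \<eta>: "\<eta> > 0" "N * \<gamma> > 0"
    using \<gamma> n by (auto simp: \<eta>_def N_def)
  have e: "e > 0" and d: "d > 0" and c0: "c0 > 0" and K: "K > 0"
    using \<eta> L by (auto simp: e_def d_def c0_def K_def \<eta>_def intro!: add_pos_pos)
  have J_nonneg: "J f \<ge> 0" if "continuous_on {0..R} f" "\<forall>r\<in>{0..R}. f r \<ge> 0" for f
    unfolding J_def w_def using that
    by (intro integral_nonneg integrable_continuous_interval continuous_intros) auto
  have nonneg: "J (\<lambda>r. U r + 1) \<ge> 0" "JF \<ge> 0" "Jg \<ge> 0" "JV \<ge> 0"
    unfolding JF_def Jg_def JV_def using U_pos continuous_on_flux[OF cU cU1 cV1 c\<phi> c\<beta> \<beta>_pos \<psi> U_pos]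
    by (auto intro!: J_nonneg continuous_intros cU cLp cV simp: less_imp_le)
  then have coeffs: "A \<ge> 0" "B \<ge> 0" "C \<ge> 0" "P \<ge> 0"
    using r0 e d K \<gamma> b L by (auto simp: A_def B_def C_def P_def N_def)
  have "c0 * integral {0..r0} (\<lambda>r. r^(n-1) * (V1 r)^2)
      \<le> K * J (\<lambda>r. G (U r)) + A * (r0 * JF) + B * (r0 * Jg) + C * JV + P"
    using radial_pohozaev_extended[OF n r0 cU cU1 cV cV1 cV2 cLp cG U_pos dU dV1 Lp c\<phi> c\<beta> \<beta>_pos \<psi> dH H_nonneg
        HG \<psi>G \<gamma>(1) b L e d]
    unfolding c0_def K_def A_def B_def C_def P_def JF_def Jg_def JV_def J_def w_def N_def by (simp add: mult_ac)
  also have "\<dots> \<le> K * J (\<lambda>r. G (U r)) + T * (r0 * JF + r0 * Jg + JV + 1)"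
  proof -
    have "A * (r0 * JF) \<le> T * (r0 * JF)" "B * (r0 * Jg) \<le> T * (r0 * Jg)" "C * JV \<le> T * JV" "P \<le> T"
      using coeffs nonneg r0 unfolding T_def by (auto intro!: mult_right_mono)
    then show ?thesis
      by (simp add: algebra_simps)
  qed
  finally have "integral {0..r0} (\<lambda>r. r^(n-1) * (V1 r)^2)
      \<le> (K * J (\<lambda>r. G (U r)) + T * (r0 * JF + r0 * Jg + JV + 1)) / c0"
    using c0 by (simp add: pos_le_divide_eq mult.commute)
  also have "\<dots> \<le> K / c0 * J (\<lambda>r. G (U r)) + (T / c0 + 1) * (r0 * JF + r0 * Jg + JV + 1)"
    using nonneg r0 by (simp add: add_divide_distrib distrib_right)
  moreover have "K / c0 = pohozaev_mu n \<gamma>"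
    using L by (simp add: pohozaev_mu_def K_def c0_def e_def d_def \<eta>_def N_def)
  moreover have "J (\<lambda>r. U r + 1) = integral {0..R} (\<lambda>r. r^(n-1) * U r) + integral {0..R} (\<lambda>r. r^(n-1))"
    unfolding J_def w_def distrib_left mult_1_right
    by (intro integral_add integrable_continuous_interval continuous_intros cU)
  then have "T / c0 + 1
      = pohozaev_const n \<gamma> b L R (integral {0..R} (\<lambda>r. r^(n-1) * U r)) (integral {0..R} (\<lambda>r. r^(n-1)))"
    unfolding pohozaev_const_def Let_def T_def P_def
    by (simp add: A_def B_def C_def K_def c0_def e_def d_def \<eta>_def N_def)
  ultimately show ?thesis
    unfolding JF_def Jg_def JV_def J_def w_def by simp
qed

lemma C2_real_on_continuous: "C2_real_on S f \<Longrightarrow> continuous_on S f"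
  unfolding C2_real_on_def by (metis DERIV_continuous_on)

lemma continuous_on_LBINT_upper:
  fixes f :: "real \<Rightarrow> real"
  assumes "continuous_on {a..b} f" "a \<le> c" "c \<le> b"
  shows "continuous_on {a..b} (\<lambda>u. LBINT y=c..u. f y)"
proof (rule DERIV_continuous_on[where D=f])
  fix x assume "x \<in> {a..b}"
  then show "((\<lambda>u. LBINT y=c..u. f y) has_real_derivative f x) (at x within {a..b})"
    using interval_integral_FTC2[OF assms(2,3,1)] by (simp add: has_real_derivative_iff_has_vector_derivative)
qed

lemma continuous_on_double_LBINT:
  fixes \<phi> \<psi> G :: "real \<Rightarrow> real"
  assumes c\<phi>: "continuous_on {0..} \<phi>" and c\<psi>: "continuous_on {0..} \<psi>"
    and \<psi>_pos: "\<forall>s>0. \<psi> s > 0" and s0: "s0 > 0"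
    and G_def: "\<forall>s>0. G s = (LBINT \<sigma>=ereal s0..ereal s. (LBINT \<tau>=ereal s0..ereal \<sigma>. \<phi> \<tau> / \<psi> \<tau>))"
  shows "continuous_on {0<..} G"
proof (rule continuous_at_imp_continuous_on, intro ballI)
  fix x :: real assume "x \<in> {0<..}"
  define a where "a = min x s0 / 2"
  define b where "b = max x s0 + 1"
  have ab: "0 < a" "a \<le> s0" "s0 \<le> b" "x \<in> interior {a..b}"
    using \<open>x \<in> {0<..}\<close> s0 by (auto simp: a_def b_def)
  have sub: "{a..b} \<subseteq> {0..}"
    using ab by auto
  have "continuous_on {a..b} (\<lambda>\<tau>. \<phi> \<tau> / \<psi> \<tau>)"
    using \<psi>_pos ab by (intro continuous_intros continuous_on_subset[OF c\<phi> sub] continuous_on_subset[OF c\<psi> sub])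
      (auto intro!: less_imp_neq[symmetric])
  then have "continuous_on {a..b} (\<lambda>s. LBINT \<sigma>=s0..s. (LBINT \<tau>=s0..\<sigma>. \<phi> \<tau> / \<psi> \<tau>))"
    using ab by (intro continuous_on_LBINT_upper)
  then have "continuous_on {a..b} G"
    by (rule continuous_on_eq) (use G_def ab in auto)
  then show "isCont G x"
    using ab(4) by (rule continuous_on_interior)
qed

lemma H_derivative_nonneg:
  fixes \<phi> \<psi> \<beta> H :: "real \<Rightarrow> real"
  assumes c\<phi>: "continuous_on {0..} \<phi>" and c\<beta>: "continuous_on {0..} \<beta>"
    and \<phi>_pos: "\<forall>s\<ge>0. \<phi> s > 0" and \<beta>_pos: "\<forall>s\<ge>0. \<beta> s > 0"
    and \<psi>: "\<forall>s\<ge>0. \<psi> s = s * \<beta> s"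
    and H_def: "\<forall>s\<ge>0. H s = (LBINT \<sigma>=ereal 0..ereal s. \<sigma> * \<phi> \<sigma> / \<psi> \<sigma>)"
  shows "\<forall>s>0. (H has_real_derivative \<phi> s / \<beta> s) (at s)" "\<forall>s>0. H s \<ge> 0"
proof -
  define k where "k \<sigma> = \<phi> \<sigma> / \<beta> \<sigma>" for \<sigma>
  have ck: "continuous_on {0..} k"
    unfolding k_def using \<beta>_pos by (intro continuous_intros c\<phi> c\<beta>) (auto intro!: less_imp_neq[symmetric])
  have H_eq: "H s = integral {0..s} k" if s: "s \<ge> 0" for s
  proof -
    have "H s = (LBINT \<sigma>=ereal 0..ereal s. k \<sigma>)"
      unfolding H_def[rule_format, OF s]
    proof (rule interval_integral_cong)
      fix x assume "x \<in> einterval (min (ereal 0) (ereal s)) (max (ereal 0) (ereal s))"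
      then have "x > 0"
        using s by (auto simp: einterval_def min_def max_def)
      then show "x * \<phi> x / \<psi> x = k x"
        using \<psi> \<beta>_pos by (simp add: k_def less_imp_le)
    qed
    also have "\<dots> = integral {0..s} k"
      using s continuous_on_subset[OF ck]
      by (intro interval_integral_eq_integral borel_integrable_atLeastAtMost') auto
    finally show ?thesis .
  qed
  show "\<forall>s>0. (H has_real_derivative \<phi> s / \<beta> s) (at s)"
  proof (intro allI impI)
    fix s :: real assume s: "s > 0"
    have "((\<lambda>u. integral {0..u} k) has_vector_derivative k s) (at s within {0..s+1})"
      using s by (intro integral_has_vector_derivative continuous_on_subset[OF ck]) auto
    moreover have "at s within {0..s+1} = at s"
      using s by (intro at_within_interior) simp
    ultimately have "((\<lambda>u. integral {0..u} k) has_real_derivative k s) (at s)"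
      by (simp add: has_real_derivative_iff_has_vector_derivative)
    then have "(H has_real_derivative k s) (at s)"
    proof (rule has_field_derivative_transform_within_open[where S="{0<..}"])
      show "integral {0..x} k = H x" if "x \<in> {0<..}" for x
        using H_eq[of x] that by simp
    qed (use s in auto)
    then show "(H has_real_derivative \<phi> s / \<beta> s) (at s)"
      by (simp add: k_def)
  qed
  show "\<forall>s>0. H s \<ge> 0"
  proof (intro allI impI)
    fix s :: real assume s: "s > 0"
    have "integral {0..s} k \<ge> 0"
      using \<phi>_pos \<beta>_pos continuous_on_subset[OF ck, of "{0..s}"]
      by (intro integral_nonneg integrable_continuous_interval) (auto simp: k_def less_imp_le)
    then show "H s \<ge> 0"
      using H_eq[of s] s by simp
  qed
qed

lemma continuous_on_profiles:
  assumes "C1_grad_on (cball 0 R) f df" "e \<in> Basis"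
  shows "continuous_on {0..R} (\<lambda>r. f (r *\<^sub>R e))" "continuous_on {0..R} (\<lambda>r. df (r *\<^sub>R e) \<bullet> e)"
  using C1_grad_on_continuous[OF assms(1)]
  by (auto intro!: continuous_intros continuous_on_along_basis[OF _ assms(2)])

lemma continuous_on_laplacian_profile:
  assumes "C2_grad_on (cball 0 R) v dv hv" "e \<in> Basis"
  shows "continuous_on {0..R} (\<lambda>r. laplacian hv (r *\<^sub>R e))"
  using assms unfolding laplacian_def C2_grad_on_def
  by (intro continuous_on_sum continuous_intros continuous_on_along_basis[OF _ assms(2)]
      C1_grad_on_continuous(2)) auto

lemma radial_profile_estimate:
  fixes u v :: "'a::euclidean_space \<Rightarrow> real" and \<phi> \<psi> \<beta> G H :: "real \<Rightarrow> real"
  assumes \<gamma>: "0 < \<gamma>" "real DIM('a) * \<gamma> < real DIM('a) - 2"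
    and c\<phi>: "continuous_on {0..} \<phi>" and c\<beta>: "continuous_on {0..} \<beta>"
    and \<beta>_pos: "\<forall>s\<ge>0. \<beta> s > 0" and \<psi>: "\<forall>s\<ge>0. \<psi> s = s * \<beta> s"
    and cG: "continuous_on {0<..} G"
    and dH: "\<forall>s>0. (H has_real_derivative \<phi> s / \<beta> s) (at s)" and H_nonneg: "\<forall>s>0. H s \<ge> 0"
    and HG: "\<forall>s>0. H s \<le> \<gamma> * G s + b * (s + 1)"
    and \<psi>G: "\<forall>s>0. s^2 / \<psi> s \<le> L * (G s + s + 1)"
    and b: "b > 0" and L: "L > 0" and r0: "0 < r0" "r0 < R"
    and u: "C1_grad_on (cball 0 R) u du" and v: "C2_grad_on (cball 0 R) v dv hv"
    and u_pos: "\<forall>x\<in>cball 0 R. u x > 0"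
    and rad_v: "radial_on (cball 0 R) v" and e: "e \<in> Basis"
  defines "U \<equiv> \<lambda>r. u (r *\<^sub>R e)" and "U1 \<equiv> \<lambda>r. du (r *\<^sub>R e) \<bullet> e"
    and "V \<equiv> \<lambda>r. v (r *\<^sub>R e)" and "V1 \<equiv> \<lambda>r. dv (r *\<^sub>R e) \<bullet> e"
    and "Lp \<equiv> \<lambda>r. laplacian hv (r *\<^sub>R e)" and "n \<equiv> DIM('a)"
  shows "integral {0..r0} (\<lambda>r. r^(n-1) * (V1 r)^2)
     \<le> pohozaev_mu n \<gamma> * integral {0..R} (\<lambda>r. r^(n-1) * G (U r))
       + pohozaev_const n \<gamma> b L R (integral {0..R} (\<lambda>r. r^(n-1) * U r)) (integral {0..R} (\<lambda>r. r^(n-1)))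
         * (r0 * integral {0..R} (\<lambda>r. r^(n-1) * (Lp r - V r + U r)^2)
            + r0 * integral {0..R}
                (\<lambda>r. r^(n-1) * (\<phi> (U r) / sqrt (\<psi> (U r)) * U1 r - sqrt (\<psi> (U r)) * V1 r)^2)
            + integral {0..R} (\<lambda>r. r^(n-1) * (V r)^2) + 1)"
proof -
  define V2 where "V2 r = hv e (r *\<^sub>R e) \<bullet> e" for r
  have v1: "C1_grad_on (cball 0 R) v dv"
    using v unfolding C2_grad_on_def by blast
  have dv_c1: "C1_grad_on (cball 0 R) (\<lambda>y. dv y \<bullet> c) (hv c)" if "c \<in> Basis" for c
    using v that unfolding C2_grad_on_def by blast
  have cU: "continuous_on {0..R} U" and cU1: "continuous_on {0..R} U1"
    and cV: "continuous_on {0..R} V" and cV1: "continuous_on {0..R} V1"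
    and cV2: "continuous_on {0..R} V2" and cLp: "continuous_on {0..R} Lp"
    using continuous_on_profiles[OF u e] continuous_on_profiles[OF v1 e]
      continuous_on_profiles(2)[OF dv_c1[OF e] e] continuous_on_laplacian_profile[OF v e]
    unfolding U_def U1_def V_def V1_def V2_def Lp_def by auto
  have U_pos: "\<forall>r\<in>{0..R}. U r > 0"
    unfolding U_def using u_pos e by (simp add: norm_Basis)
  have dU: "\<forall>r\<in>{0<..<R}. (U has_real_derivative U1 r) (at r)"
    unfolding U_def U1_def using has_real_derivative_along_basis[OF u e] by simp
  have dV1: "\<forall>r\<in>{0<..<R}. (V1 has_real_derivative V2 r) (at r)"
    unfolding V1_def V2_def using has_real_derivative_along_basis[OF dv_c1[OF e] e] by simp
  have Lp: "\<forall>r\<in>{0<..<R}. Lp r = V2 r + (real n - 1) * V1 r / r"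
  proof
    fix r assume r: "r \<in> {0<..<R}"
    then have "r *\<^sub>R e \<noteq> 0" "norm (r *\<^sub>R e) < R"
      using e by (auto simp: norm_Basis)
    from radial_laplacian[OF v rad_v e this] show "Lp r = V2 r + (real n - 1) * V1 r / r"
      using r e by (simp add: Lp_def V1_def V2_def n_def norm_Basis)
  qed
  have "continuous_on {0..R} (\<lambda>r. G (U r))"
    using U_pos by (intro continuous_on_compose2[OF cG cU]) auto
  from radial_pohozaev_estimate[OF r0 cU cU1 cV cV1 cV2 cLp this U_pos dU dV1 Lp c\<phi> c\<beta> \<beta>_pos \<psi> dH
      H_nonneg \<gamma>[folded n_def] HG \<psi>G b L]
  show ?thesis .
qed

lemma radial_gradient_estimate:
  fixes u v :: "'a::euclidean_space \<Rightarrow> real" and \<phi> \<psi> \<beta> G H :: "real \<Rightarrow> real"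
  assumes \<gamma>: "0 < \<gamma>" "real DIM('a) * \<gamma> < real DIM('a) - 2"
    and c\<phi>: "continuous_on {0..} \<phi>" and c\<beta>: "continuous_on {0..} \<beta>"
    and \<beta>_pos: "\<forall>s\<ge>0. \<beta> s > 0" and \<psi>: "\<forall>s\<ge>0. \<psi> s = s * \<beta> s"
    and cG: "continuous_on {0<..} G"
    and dH: "\<forall>s>0. (H has_real_derivative \<phi> s / \<beta> s) (at s)" and H_nonneg: "\<forall>s>0. H s \<ge> 0"
    and HG: "\<forall>s>0. H s \<le> \<gamma> * G s + b * (s + 1)"
    and \<psi>G: "\<forall>s>0. s^2 / \<psi> s \<le> L * (G s + s + 1)"
    and b: "b > 0" and L: "L > 0" and r0: "0 < r0" "r0 < R"
    and u: "C1_grad_on (cball 0 R) u du" and v: "C2_grad_on (cball 0 R) v dv hv"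
    and u_pos: "\<forall>x\<in>cball 0 R. u x > 0"
    and rad_u: "radial_on (cball 0 R) u" and rad_v: "radial_on (cball 0 R) v"
    and mass: "integral (ball 0 R) u = m"
  defines "\<omega> \<equiv> real DIM('a) * measure lborel (ball (0::'a) 1)"
  shows "integral (ball 0 r0) (\<lambda>x. (norm (dv x))\<^sup>2)
     \<le> pohozaev_mu DIM('a) \<gamma> * integral (ball 0 R) (\<lambda>x. G (u x))
       + pohozaev_const DIM('a) \<gamma> b L R (m / \<omega>) (integral {0..R} (\<lambda>r. r^(DIM('a)-1))) * max 1 \<omega>
         * (r0 * integral (ball 0 R) (\<lambda>x. (laplacian hv x - v x + u x)\<^sup>2)
            + r0 * integral (ball 0 R)
                (\<lambda>x. (norm ((\<phi> (u x) / sqrt (\<psi> (u x))) *\<^sub>R du x - sqrt (\<psi> (u x)) *\<^sub>R dv x))\<^sup>2)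
            + integral (ball 0 R) (\<lambda>x. (v x)\<^sup>2) + 1)"
proof -
  obtain e :: 'a where e: "e \<in> Basis"
    using nonempty_Basis by blast
  define n where "n = DIM('a)"
  define U where "U r = u (r *\<^sub>R e)" for r
  define U1 where "U1 r = du (r *\<^sub>R e) \<bullet> e" for r
  define V where "V r = v (r *\<^sub>R e)" for r
  define V1 where "V1 r = dv (r *\<^sub>R e) \<bullet> e" for r
  define Lp where "Lp r = laplacian hv (r *\<^sub>R e)" for r
  define g where "g r = \<phi> (U r) / sqrt (\<psi> (U r)) * U1 r - sqrt (\<psi> (U r)) * V1 r" for r
  define J where "J t f = integral {0..t} (\<lambda>r. r^(n-1) * f r)" for t and f :: "real \<Rightarrow> real"
  have v1: "C1_grad_on (cball 0 R) v dv"
    using v unfolding C2_grad_on_def by blast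
  have \<omega>: "\<omega> > 0"
    using content_ball_pos[of 1 "0::'a"] by (simp add: \<omega>_def)
  have profile: "J r0 (\<lambda>r. (V1 r)^2) \<le> pohozaev_mu n \<gamma> * J R (\<lambda>r. G (U r))
      + pohozaev_const n \<gamma> b L R (J R U) (integral {0..R} (\<lambda>r. r^(n-1)))
        * (r0 * J R (\<lambda>r. (Lp r - V r + U r)^2) + r0 * J R (\<lambda>r. (g r)^2) + J R (\<lambda>r. (V r)^2) + 1)"
    using radial_profile_estimate[OF \<gamma> c\<phi> c\<beta> \<beta>_pos \<psi> cG dH H_nonneg HG \<psi>G b L r0 u v u_pos rad_v e]
    unfolding J_def U_def U1_def V_def V1_def Lp_def g_def n_def .
  have cU: "continuous_on {0..R} U" and cU1: "continuous_on {0..R} U1"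
    and cV: "continuous_on {0..R} V" and cV1: "continuous_on {0..R} V1"
    and cLp: "continuous_on {0..R} Lp"
    using continuous_on_profiles[OF u e] continuous_on_profiles[OF v1 e] continuous_on_laplacian_profile[OF v e]
    unfolding U_def U1_def V_def V1_def Lp_def by auto
  have U_pos: "\<forall>r\<in>{0..R}. U r > 0"
    unfolding U_def using u_pos e by (simp add: norm_Basis)
  have cGU: "continuous_on {0..R} (\<lambda>r. G (U r))"
    using U_pos by (intro continuous_on_compose2[OF cG cU]) auto
  have cg: "continuous_on {0..R} g"
    unfolding g_def using continuous_on_flux[OF cU cU1 cV1 c\<phi> c\<beta> \<beta>_pos \<psi> U_pos] .
  have ball_integral: "integral (ball 0 \<rho>) f = \<omega> * J \<rho> h"
    if "continuous_on {0..R} h" "0 \<le> \<rho>" "\<rho> \<le> R" "\<And>x. x \<in> ball 0 \<rho> \<Longrightarrow> x \<noteq> 0 \<Longrightarrow> f x = h (norm x)"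
    for f :: "'a \<Rightarrow> real" and h \<rho>
    unfolding J_def \<omega>_def n_def using integral_ball_radial[OF that] .
  have ux: "u x = U (norm x)" and vx: "v x = V (norm x)" if "norm x \<le> R" for x
    unfolding U_def V_def using radial_on_eq_along_basis[OF rad_u e that] radial_on_eq_along_basis[OF rad_v e that]
    by auto
  have grad: "du x = U1 (norm x) *\<^sub>R sgn x" "dv x = V1 (norm x) *\<^sub>R sgn x" if "x \<noteq> 0" "norm x < R" for x
    unfolding U1_def V1_def using radial_gradient[OF u rad_u e that] radial_gradient[OF v1 rad_v e that] by auto
  have lap: "laplacian hv x = Lp (norm x)" if "x \<noteq> 0" "norm x < R" for x
  proof -
    have "norm x *\<^sub>R e \<noteq> 0" "norm (norm x *\<^sub>R e) < R"
      using that e by (auto simp: norm_Basis)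
    with radial_laplacian[OF v rad_v e that] radial_laplacian[OF v rad_v e this] e show ?thesis
      by (simp add: Lp_def norm_Basis)
  qed
  have R: "0 \<le> R" "R \<le> R"
    using r0 by auto
  have I: "integral (ball 0 r0) (\<lambda>x. (norm (dv x))\<^sup>2) = \<omega> * J r0 (\<lambda>r. (V1 r)^2)"
    using r0 grad(2) by (intro ball_integral continuous_intros cV1) (auto simp: norm_sgn)
  have JG: "integral (ball 0 R) (\<lambda>x. G (u x)) = \<omega> * J R (\<lambda>r. G (U r))"
    using ux by (intro ball_integral[OF cGU R]) auto
  have JF: "integral (ball 0 R) (\<lambda>x. (laplacian hv x - v x + u x)\<^sup>2) = \<omega> * J R (\<lambda>r. (Lp r - V r + U r)^2)"
    using ux vx lap by (intro ball_integral[OF _ R] continuous_intros cLp cV cU) auto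
  have Jg: "integral (ball 0 R)
      (\<lambda>x. (norm ((\<phi> (u x) / sqrt (\<psi> (u x))) *\<^sub>R du x - sqrt (\<psi> (u x)) *\<^sub>R dv x))\<^sup>2) = \<omega> * J R (\<lambda>r. (g r)^2)"
  proof (intro ball_integral[OF _ R] continuous_intros cg)
    fix x :: 'a assume x: "x \<in> ball 0 R" "x \<noteq> 0"
    then have "(\<phi> (u x) / sqrt (\<psi> (u x))) *\<^sub>R du x - sqrt (\<psi> (u x)) *\<^sub>R dv x = g (norm x) *\<^sub>R sgn x"
      using ux[of x] grad[of x] by (simp add: g_def algebra_simps)
    then show "(norm ((\<phi> (u x) / sqrt (\<psi> (u x))) *\<^sub>R du x - sqrt (\<psi> (u x)) *\<^sub>R dv x))\<^sup>2 = (g (norm x))\<^sup>2"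
      using x by (simp add: norm_sgn)
  qed
  have JV: "integral (ball 0 R) (\<lambda>x. (v x)\<^sup>2) = \<omega> * J R (\<lambda>r. (V r)^2)"
    using vx by (intro ball_integral[OF _ R] continuous_intros cV) auto
  have JU: "m = \<omega> * J R U"
    unfolding mass[symmetric] using ux by (intro ball_integral[OF cU R]) auto
  have nonneg: "J R (\<lambda>r. (f r)^2) \<ge> 0" if "continuous_on {0..R} f" for f
    unfolding J_def using that by (intro integral_nonneg integrable_continuous_interval continuous_intros) auto
  define S where "S = r0 * J R (\<lambda>r. (Lp r - V r + U r)^2) + r0 * J R (\<lambda>r. (g r)^2) + J R (\<lambda>r. (V r)^2)"
  define C where "C = pohozaev_const n \<gamma> b L R (m / \<omega>) (integral {0..R} (\<lambda>r. r^(n-1)))"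
  have S: "S \<ge> 0"
    unfolding S_def using r0 nonneg[of "\<lambda>r. Lp r - V r + U r"] nonneg[OF cg] nonneg[OF cV]
    by (simp add: continuous_intros cLp cV cU)
  have "m / \<omega> = J R U"
    using JU \<omega> by simp
  moreover have "J R U \<ge> 0" "integral {0..R} (\<lambda>r. r^(n-1)) \<ge> 0"
    unfolding J_def using U_pos
    by (auto intro!: integral_nonneg integrable_continuous_interval continuous_intros cU simp: less_imp_le)
  ultimately have "C \<ge> 1"
    unfolding C_def using \<gamma> b L r0 by (intro pohozaev_const_ge_1) (auto simp: n_def)
  have "J r0 (\<lambda>r. (V1 r)^2) \<le> pohozaev_mu n \<gamma> * J R (\<lambda>r. G (U r)) + C * (S + 1)"
    using profile JU \<omega> unfolding C_def S_def by simp
  then have "\<omega> * J r0 (\<lambda>r. (V1 r)^2) \<le> \<omega> * (pohozaev_mu n \<gamma> * J R (\<lambda>r. G (U r)) + C * (S + 1))"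
    using \<omega> by (intro mult_left_mono) auto
  also have "\<dots> = pohozaev_mu n \<gamma> * (\<omega> * J R (\<lambda>r. G (U r))) + C * (\<omega> * S + \<omega>)"
    by (simp add: algebra_simps)
  also have "\<dots> \<le> pohozaev_mu n \<gamma> * (\<omega> * J R (\<lambda>r. G (U r))) + C * max 1 \<omega> * (\<omega> * S + 1)"
    using \<open>C \<ge> 1\<close> S \<omega> by (intro add_left_mono) (simp add: algebra_simps mult_left_mono mult_right_mono max_def)
  finally show ?thesis
    unfolding I JG JF Jg JV S_def C_def n_def by (simp add: algebra_simps)
qed


theorem lemma2p1:
  fixes R :: real and \<phi> \<psi> \<beta> G H :: "real \<Rightarrow> real"
    and s0 b L \<gamma> m M B \<kappa> :: real
  assumes dim: "DIM('a::euclidean_space) \<ge> 3"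
    and R: "R > 0"
    and phi_C2: "C2_real_on {0..} \<phi>" and phi_pos: "\<forall>s\<ge>0. \<phi> s > 0"
    and psi_C2: "C2_real_on {0..} \<psi>"
    and beta_C2: "C2_real_on {0..} \<beta>" and beta_pos: "\<forall>s\<ge>0. \<beta> s > 0"
    and psi_def: "\<forall>s\<ge>0. \<psi> s = s * \<beta> s"
    and s0: "s0 > 0" and b: "b > 0" and L: "L > 0"
    and G_def: "\<forall>s>0. G s = (LBINT \<sigma>=ereal s0..ereal s. (LBINT \<tau>=ereal s0..ereal \<sigma>. \<phi> \<tau> / \<psi> \<tau>))"
    and H_def: "\<forall>s\<ge>0. H s = (LBINT \<sigma>=ereal 0..ereal s. \<sigma> * \<phi> \<sigma> / \<psi> \<sigma>)"
    and gamma: "0 < \<gamma>" "\<gamma> < (real DIM('a) - 2) / real DIM('a)"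
    and HG: "\<forall>s>0. H s \<le> \<gamma> * G s + b * (s + 1)"
    and psi_G: "\<forall>s>0. s\<^sup>2 / \<psi> s \<le> L * (G s + s + 1)"
    and m: "m > 0" and M: "M > 0" and B: "B > 0" and kappa: "\<kappa> > real DIM('a) - 2"
  shows "\<exists>\<mu> C. 0 < \<mu> \<and> \<mu> < 2 \<and> C > 0 \<and>
    (\<forall>r0 (u::'a \<Rightarrow> real) du v dv hv.
       0 < r0 \<and> r0 < R \<and>
       C1_grad_on (cball 0 R) u du \<and> C2_grad_on (cball 0 R) v dv hv \<and>
       (\<forall>x\<in>cball 0 R. u x > 0 \<and> v x > 0) \<and>
       radial_on (cball 0 R) u \<and> radial_on (cball 0 R) v \<and>
       (\<forall>x. norm x = R \<longrightarrow> dv x \<bullet> x = 0) \<and>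
       integral (ball 0 R) u = m \<and> integral (ball 0 R) v \<le> M \<and>
       (\<forall>x\<in>ball 0 R. x \<noteq> 0 \<longrightarrow> v x \<le> B * norm x powr (-\<kappa>))
     \<longrightarrow>
       integral (ball 0 r0) (\<lambda>x. (norm (dv x))\<^sup>2)
       \<le> \<mu> * integral (ball 0 R) (\<lambda>x. G (u x))
         + C * (r0 * integral (ball 0 R) (\<lambda>x. (laplacian hv x - v x + u x)\<^sup>2)
              + r0 * integral (ball 0 R)
                   (\<lambda>x. (norm ((\<phi> (u x) / sqrt (\<psi> (u x))) *\<^sub>R du x
                               - sqrt (\<psi> (u x)) *\<^sub>R dv x))\<^sup>2)
              + integral (ball 0 R) (\<lambda>x. (v x)\<^sup>2) + 1))"
proof -
  have c\<phi>: "continuous_on {0..} \<phi>" and c\<beta>: "continuous_on {0..} \<beta>" and c\<psi>: "continuous_on {0..} \<psi>"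
    using phi_C2 beta_C2 psi_C2 by (simp_all add: C2_real_on_continuous)
  have \<psi>_pos: "\<forall>s>0. \<psi> s > 0"
    using psi_def beta_pos by simp
  note H = H_derivative_nonneg[OF c\<phi> c\<beta> phi_pos beta_pos psi_def H_def]
  have cG: "continuous_on {0<..} G"
    by (rule continuous_on_double_LBINT[OF c\<phi> c\<psi> \<psi>_pos s0 G_def])
  have \<gamma>: "real DIM('a) * \<gamma> < real DIM('a) - 2"
    using gamma(2) by (simp add: pos_less_divide_eq mult.commute)
  define \<omega> where "\<omega> = real DIM('a) * measure lborel (ball (0::'a) 1)"
  define C where "C = pohozaev_const DIM('a) \<gamma> b L R (m / \<omega>) (integral {0..R} (\<lambda>r. r^(DIM('a)-1))) * max 1 \<omega>"
  have "\<omega> > 0"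
    using content_ball_pos[of 1 "0::'a"] by (simp add: \<omega>_def)
  moreover have "integral {0..R} (\<lambda>r. r^(DIM('a)-1)) \<ge> 0"
    by (intro integral_nonneg integrable_continuous_interval continuous_intros) auto
  ultimately have "pohozaev_const DIM('a) \<gamma> b L R (m / \<omega>) (integral {0..R} (\<lambda>r. r^(DIM('a)-1))) \<ge> 1"
    using m by (intro pohozaev_const_ge_1[OF gamma(1) \<gamma> b L R]) simp
  then have C_pos: "C > 0"
    unfolding C_def by (intro mult_pos_pos) auto
  note estimate = radial_gradient_estimate[OF gamma(1) \<gamma> c\<phi> c\<beta> beta_pos psi_def cG H HG psi_G b L]
  show ?thesis
    by (rule exI[of _ "pohozaev_mu DIM('a) \<gamma>"], rule exI[of _ C],
        intro conjI allI impI pohozaev_mu_bounds[OF gamma(1) \<gamma>] C_pos, elim conjE,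
        unfold C_def \<omega>_def, rule estimate) blast+
qed

end
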